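(* Let $n,a,b$ be positive integers, $c$ a nonnegative integer and $0\le k\le n$ an integer. Then $$\Psi_n(k,a,b,c)=\binom{n}{k}M_n(a,b,c)\prod_{j=1}^{k}\frac{a-1+(n-j)\frac c2}{b+(j-1)\frac c2}.$$
   Context: All constant terms are taken with $\operatorname{CT}_x=\operatorname{CT}_{x_n}\cdots\operatorname{CT}_{x_1}$ (iterated constant-term extraction), where $(1-x_i)^{-b}$ and $x_i/(1-x_i)$ are expanded as power series in $x_i$, and for $i<j$, $(x_j-x_i)^{-c}=x_j^{-c}(1-x_i/x_j)^{-c}$ is expanded as a power series in $x_i/x_j$. $$M_n(a,b,c):=\operatorname{CT}_x\prod_{i=1}^n(1-x_i)^{-b}x_i^{-a+1}\prod_{1\le i<j\le n}(x_j-x_i)^{-c},$$ $$\Psi_n(k,a,b,c):=\operatorname{CT}_x[t^k]\prod_{i=1}^n(1-x_i)^{-b}x_i^{-a+1}\Big(1+t\frac{x_i}{1-x_i}\Big)\prod_{1\le i<j\le n}(x_j-x_i)^{-c},$$ with $[t^k]$ denoting the coefficient of $t^k$. *)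

theory Defs
  imports Complex_Main
begin

text \<open>Coefficient of y^m in the power series expansion of (1 - y)^(-beta):
  beta (beta+1) ... (beta+m-1) / m!  (equal to 1 for m = 0, and 0 for beta = 0, m > 0).\<close>
definition nb :: "nat \<Rightarrow> nat \<Rightarrow> real" where
  "nb beta m = pochhammer (real beta) m / fact m"

text \<open>Variables are x_0, ..., x_(n-1) (0-based).  Expanding
  (1-x_i)^(-b) = sum over m_i of nb b m_i x_i^m_i and, for i<j,
  (x_j - x_i)^(-c) = sum over p_ij of nb c p_ij x_i^p_ij x_j^(-c-p_ij),
  a monomial of the product is indexed by (m,p) (extended by 0 outside the range).
  The exponent of x_k in the monomial indexed by (m,p) (times x_k^(r_k) from an
  extra factor) is given below; the iterated constant term is the sum of the
  coefficients of all monomials in which every exponent vanishes.\<close>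
definition xexp :: "nat \<Rightarrow> nat \<Rightarrow> nat \<Rightarrow> (nat \<Rightarrow> nat) \<Rightarrow> (nat \<Rightarrow> nat) \<Rightarrow> (nat \<Rightarrow> nat \<Rightarrow> nat) \<Rightarrow> nat \<Rightarrow> int" where
  "xexp n a c m r p k =
     int (m k) + int (r k) + 1 - int a
     + (\<Sum>j\<in>{k<..<n}. int (p k j)) - (\<Sum>i<k. int c + int (p i k))"

definition M_index :: "nat \<Rightarrow> nat \<Rightarrow> nat \<Rightarrow> ((nat \<Rightarrow> nat) \<times> (nat \<Rightarrow> nat \<Rightarrow> nat)) set" where
  "M_index n a c = {(m, p).
      (\<forall>i. n \<le> i \<longrightarrow> m i = 0) \<and>
      (\<forall>i j. \<not> (i < j \<and> j < n) \<longrightarrow> p i j = 0) \<and>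
      (\<forall>k<n. xexp n a c m (\<lambda>_. 0) p k = 0)}"

definition Mn :: "nat \<Rightarrow> nat \<Rightarrow> nat \<Rightarrow> nat \<Rightarrow> real" where
  "Mn n a b c = (\<Sum>(m, p)\<in>M_index n a c.
      (\<Prod>i<n. nb b (m i)) * (\<Prod>j<n. \<Prod>i<j. nb c (p i j)))"

text \<open>For Psi, each factor (1 + t x_i/(1-x_i)) = 1 + sum over r>=1 of t x_i^r contributes
  x_i^(r_i) t^[r_i > 0] with coefficient 1; taking [t^k] means exactly k of the r_i are positive.\<close>
definition Psi_index :: "nat \<Rightarrow> nat \<Rightarrow> nat \<Rightarrow> nat \<Rightarrow>
    ((nat \<Rightarrow> nat) \<times> (nat \<Rightarrow> nat) \<times> (nat \<Rightarrow> nat \<Rightarrow> nat)) set" where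
  "Psi_index n k a c = {(m, r, p).
      (\<forall>i. n \<le> i \<longrightarrow> m i = 0 \<and> r i = 0) \<and>
      (\<forall>i j. \<not> (i < j \<and> j < n) \<longrightarrow> p i j = 0) \<and>
      card {i. i < n \<and> 0 < r i} = k \<and>
      (\<forall>i<n. xexp n a c m r p i = 0)}"

definition Psi :: "nat \<Rightarrow> nat \<Rightarrow> nat \<Rightarrow> nat \<Rightarrow> nat \<Rightarrow> real" where
  "Psi n k a b c = (\<Sum>(m, r, p)\<in>Psi_index n k a c.
      (\<Prod>i<n. nb b (m i)) * (\<Prod>j<n. \<Prod>i<j. nb c (p i j)))"

end

theory Submission
  imports Defs "HOL-Library.Function_Algebras" "HOL-Computational_Algebra.Formal_Power_Series"
begin

text \<open>Substituting \<open>x\<^sub>i = t\<^sub>i t\<^sub>i\<^sub>+\<^sub>1 \<cdots> t\<^sub>n\<^sub>-\<^sub>1\<close> turns the integrand, expanded as the iterated constant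
  term prescribes, into a power series in \<open>t\<close>, and the constant term into one coefficient of it.
  Expanding \<open>\<Prod>\<^sub>i (1 + t y\<^sub>i)\<close> with \<open>y\<^sub>i = x\<^sub>i/(1 - x\<^sub>i)\<close> shows that \<open>\<Psi>\<^sub>n(r,a,b,c)\<close> is the constant
  term of the integrand times the elementary symmetric function \<open>e\<^sub>r(y)\<close>. The Euler operator
  \<open>x\<^sub>k \<partial>/\<partial>x\<^sub>k\<close> multiplies that coefficient by \<open>a - 1 + c k\<close>, while on the integrand it produces
  the logarithmic derivative \<open>b y\<^sub>k + c \<Sum>\<^sub>j\<^sub>\<noteq>\<^sub>k w\<^sub>k\<^sub>j + c k\<close> with \<open>w\<^sub>k\<^sub>j = x\<^sub>k/(x\<^sub>j - x\<^sub>k)\<close>. Summing over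
  \<open>k \<notin> R\<close> and over all \<open>r\<close>-sets \<open>R\<close>, the relations \<open>w\<^sub>k\<^sub>j + w\<^sub>j\<^sub>k = -1\<close> and
  \<open>y\<^sub>j w\<^sub>k\<^sub>j + y\<^sub>k w\<^sub>j\<^sub>k = y\<^sub>j y\<^sub>k\<close> give the recurrence
  \<open>(b (r+1) + c (r+1 choose 2)) \<Psi>\<^sub>r\<^sub>+\<^sub>1 = (c (n-r choose 2) + (a-1)(n-r)) \<Psi>\<^sub>r\<close>, which
  telescopes to the product formula.\<close>

unbundle fps_syntax

section \<open>Formal power series in infinitely many variables\<close>

definition fin_supp :: "('v \<Rightarrow> nat) \<Rightarrow> bool" where
  "fin_supp g \<longleftrightarrow> finite {i. g i \<noteq> 0}"

lemma fin_supp_le: "fin_supp g \<Longrightarrow> u \<le> g \<Longrightarrow> fin_supp u"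
  unfolding fin_supp_def le_fun_def
  by (erule finite_subset[rotated]) (metis (mono_tags) Collect_mono le_zero_eq)

lemma fin_supp_diff: "fin_supp g \<Longrightarrow> fin_supp (g - u)"
  unfolding fin_supp_def by (erule finite_subset[rotated]) auto

lemma fin_supp_add: "fin_supp (u + v) \<longleftrightarrow> fin_supp u \<and> fin_supp v"
  unfolding fin_supp_def by (auto intro: finite_subset[rotated] simp: Collect_disj_eq[symmetric])

lemma finite_le_fin_supp:
  assumes "fin_supp g"
  shows "finite {u. u \<le> g}"
proof -
  let ?A = "{i. g i \<noteq> 0}"
  have "{u. u \<le> g} \<subseteq> {u. \<forall>i. (i \<in> ?A \<longrightarrow> u i \<in> {..Max (g ` ?A)}) \<and> (i \<notin> ?A \<longrightarrow> u i = 0)}"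
  proof (intro subsetI CollectI allI conjI impI)
    fix u i assume "u \<in> {u. u \<le> g}"
    then have ui: "u i \<le> g i" by (simp add: le_fun_def)
    show "u i \<in> {..Max (g ` ?A)}" if "i \<in> ?A"
    proof -
      have "g i \<le> Max (g ` ?A)"
        using assms that unfolding fin_supp_def by (intro Max_ge) auto
      then show ?thesis using ui by simp
    qed
    show "u i = 0" if "i \<notin> ?A" using ui that by simp
  qed
  moreover have "finite {u. \<forall>i. (i \<in> ?A \<longrightarrow> u i \<in> {..Max (g ` ?A)}) \<and> (i \<notin> ?A \<longrightarrow> u i = (0::nat))}"
    using assms unfolding fin_supp_def by (intro finite_set_of_finite_funs) auto
  ultimately show ?thesis by (rule finite_subset)
qed

lemma le_fun_add_diff: "u \<le> g \<Longrightarrow> u + (g - u) = (g :: 'v \<Rightarrow> nat)"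
  by (auto simp: le_fun_def fun_eq_iff)

lemma le_fun_diff_diff: "u \<le> g \<Longrightarrow> g - (g - u) = (u :: 'v \<Rightarrow> nat)"
  by (auto simp: le_fun_def fun_eq_iff)

lemma sum_le_fun_assoc:
  fixes F :: "('v \<Rightarrow> nat) \<Rightarrow> ('v \<Rightarrow> nat) \<Rightarrow> ('v \<Rightarrow> nat) \<Rightarrow> 'a::comm_monoid_add"
  assumes g: "fin_supp g"
  shows "(\<Sum>s | s \<le> g. \<Sum>u | u \<le> s. F u (s - u) (g - s))
       = (\<Sum>u | u \<le> g. \<Sum>v | v \<le> g - u. F u v (g - u - v))"
proof -
  have fin: "finite {s. s \<le> g}" by (rule finite_le_fin_supp[OF g])
  have "(\<Sum>s | s \<le> g. \<Sum>u | u \<le> s. F u (s - u) (g - s))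
      = (\<Sum>(s, u) \<in> Sigma {s. s \<le> g} (\<lambda>s. {u. u \<le> s}). F u (s - u) (g - s))"
    using g by (intro sum.Sigma fin) (auto intro: finite_le_fin_supp fin_supp_le)
  also have "\<dots> = (\<Sum>(u, v) \<in> Sigma {u. u \<le> g} (\<lambda>u. {v. v \<le> g - u}). F u v (g - u - v))"
  proof (rule sum.reindex_bij_witness[of _ "\<lambda>(u, v). (u + v, u)" "\<lambda>(s, u). (u, s - u)"], goal_cases)
    case (1 p) then show ?case by (auto simp: le_fun_add_diff)
  next
    case (2 p) then show ?case by (auto simp: le_fun_def intro: diff_le_mono order.trans) (meson diff_le_mono)
  next
    case (3 p) then show ?case by (auto simp: fun_eq_iff)
  next
    case (4 p) then show ?case by (auto simp: le_fun_def) (metis add.commute le_diff_conv2)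
  next
    case (5 p)
    then have "g - snd p - (fst p - snd p) = g - fst p"
      by (auto simp: le_fun_def fun_eq_iff)
    then show ?case by (auto split: prod.split)
  qed
  also have "\<dots> = (\<Sum>u | u \<le> g. \<Sum>v | v \<le> g - u. F u v (g - u - v))"
    using g by (intro sum.Sigma[symmetric] fin) (auto intro: finite_le_fin_supp fin_supp_diff)
  finally show ?thesis .
qed

text \<open>A series is its coefficient function on exponent vectors; the coefficient of a monomial
  with infinitely many nonzero exponents is forced to vanish, so that products are finite
  convolutions.\<close>

typedef (overloaded) ('v, 'a) mps = "{f :: ('v \<Rightarrow> nat) \<Rightarrow> 'a::zero. \<forall>g. \<not> fin_supp g \<longrightarrow> f g = 0}"
  morphisms mcoeff Abs_mps
  by (rule exI[of _ "\<lambda>_. 0"]) simp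

setup_lifting type_definition_mps

lemma mcoeff_not_fin_supp: "\<not> fin_supp g \<Longrightarrow> mcoeff f g = 0"
  using mcoeff by auto

lemma mps_eqI: "(\<And>g. fin_supp g \<Longrightarrow> mcoeff f g = mcoeff h g) \<Longrightarrow> f = h"
  by (metis mcoeff_inject mcoeff_not_fin_supp ext)

instantiation mps :: (type, comm_ring_1) comm_ring_1
begin

lift_definition zero_mps :: "('a, 'b) mps" is "\<lambda>_. 0" by simp
lift_definition one_mps :: "('a, 'b) mps" is "\<lambda>g. if g = 0 then 1 else 0"
  by (auto simp: fin_supp_def)
lift_definition plus_mps :: "('a, 'b) mps \<Rightarrow> ('a, 'b) mps \<Rightarrow> ('a, 'b) mps"
  is "\<lambda>f h g. f g + h g" by simp
lift_definition minus_mps :: "('a, 'b) mps \<Rightarrow> ('a, 'b) mps \<Rightarrow> ('a, 'b) mps"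
  is "\<lambda>f h g. f g - h g" by simp
lift_definition uminus_mps :: "('a, 'b) mps \<Rightarrow> ('a, 'b) mps" is "\<lambda>f g. - f g" by simp
lift_definition times_mps :: "('a, 'b) mps \<Rightarrow> ('a, 'b) mps \<Rightarrow> ('a, 'b) mps"
  is "\<lambda>f h g. if fin_supp g then \<Sum>u | u \<le> g. f u * h (g - u) else 0" by simp

lemma mcoeff_mult: "fin_supp g \<Longrightarrow> mcoeff (f * h) g = (\<Sum>u | u \<le> g. mcoeff f u * mcoeff h (g - u))"
  by transfer simp

instance
proof
  fix f h k :: "('a, 'b) mps"
  show "f * h * k = f * (h * k)"
  proof (rule mps_eqI)
    fix g :: "'a \<Rightarrow> nat" assume g: "fin_supp g"
    have "mcoeff (f * h * k) g = (\<Sum>s | s \<le> g. mcoeff (f * h) s * mcoeff k (g - s))"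
      using g by (rule mcoeff_mult)
    also have "\<dots> = (\<Sum>s | s \<le> g. \<Sum>u | u \<le> s. mcoeff f u * mcoeff h (s - u) * mcoeff k (g - s))"
      by (intro sum.cong refl) (simp add: mcoeff_mult fin_supp_le[OF g] sum_distrib_right)
    also have "\<dots> = (\<Sum>u | u \<le> g. \<Sum>v | v \<le> g - u. mcoeff f u * mcoeff h v * mcoeff k (g - u - v))"
      by (rule sum_le_fun_assoc[OF g])
    also have "\<dots> = (\<Sum>u | u \<le> g. mcoeff f u * mcoeff (h * k) (g - u))"
      by (intro sum.cong refl)
         (simp add: mcoeff_mult fin_supp_diff[OF g] sum_distrib_left mult.assoc diff_diff_eq)
    also have "\<dots> = mcoeff (f * (h * k)) g"
      using g by (rule mcoeff_mult[symmetric])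
    finally show "mcoeff (f * h * k) g = mcoeff (f * (h * k)) g" .
  qed
  show "f * h = h * f"
  proof (rule mps_eqI)
    fix g :: "'a \<Rightarrow> nat" assume g: "fin_supp g"
    have "(\<Sum>u | u \<le> g. mcoeff f u * mcoeff h (g - u)) = (\<Sum>u | u \<le> g. mcoeff h u * mcoeff f (g - u))"
      by (rule sum.reindex_bij_witness[of _ "\<lambda>u. g - u" "\<lambda>u. g - u"])
         (auto simp: le_fun_diff_diff mult.commute le_fun_def)
    then show "mcoeff (f * h) g = mcoeff (h * f) g" using g by (simp add: mcoeff_mult)
  qed
  show "1 * f = f"
  proof (rule mps_eqI)
    fix g :: "'a \<Rightarrow> nat" assume g: "fin_supp g"
    have "mcoeff (1 * f) g = (\<Sum>u | u \<le> g. if u = 0 then mcoeff f (g - u) else 0)"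
      using g by (simp add: mcoeff_mult one_mps.rep_eq if_distrib[of "\<lambda>x. x * _"] cong: if_cong)
    also have "\<dots> = mcoeff f g"
      using finite_le_fin_supp[OF g] by (simp add: sum.delta le_fun_def)
    finally show "mcoeff (1 * f) g = mcoeff f g" .
  qed
  show "(f + h) * k = f * k + h * k"
    by (rule mps_eqI) (simp add: mcoeff_mult plus_mps.rep_eq distrib_right sum.distrib)
  show "(0 :: ('a, 'b) mps) \<noteq> 1"
    by (metis (mono_tags) one_mps.rep_eq zero_mps.rep_eq zero_neq_one)
  show "f + h + k = f + (h + k)" by transfer (simp add: add.assoc)
  show "f + h = h + f" by transfer (simp add: add.commute)
  show "0 + f = f" by transfer simp
  show "- f + f = 0" by transfer simp
  show "f - h = f + - h" by transfer simp
qed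

end

lemma mcoeff_add [simp]: "mcoeff (f + h) g = mcoeff f g + mcoeff h g"
  by transfer simp

lemma mcoeff_diff [simp]: "mcoeff (f - h) g = mcoeff f g - mcoeff h g"
  by transfer simp

lemma mcoeff_uminus [simp]: "mcoeff (- f) g = - mcoeff f g"
  by transfer simp

lemma mcoeff_0 [simp]: "mcoeff 0 g = 0"
  by transfer simp

lemma mcoeff_1: "mcoeff 1 g = (if g = 0 then 1 else 0)"
  by transfer simp

lemma mcoeff_sum: "mcoeff (sum f A) g = (\<Sum>a\<in>A. mcoeff (f a) g)"
  by (induction A rule: infinite_finite_induct) auto

lemma mcoeff_of_nat_mult: "mcoeff (of_nat m * f) g = of_nat m * mcoeff f g"
  by (induction m) (simp_all add: algebra_simps)

lemma mcoeff_of_int_mult: "mcoeff (of_int z * f) g = of_int z * mcoeff f g"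
  by (cases z rule: int_cases2) (simp_all add: mcoeff_of_nat_mult)

lemma scale_fun_le_iff:
  assumes "u \<noteq> 0"
  shows "of_nat i * u \<le> of_nat m * (u :: 'v \<Rightarrow> nat) \<longleftrightarrow> i \<le> m"
proof
  obtain l where l: "u l \<noteq> 0" using assms by (auto simp: fun_eq_iff)
  assume "of_nat i * u \<le> of_nat m * u"
  then have "(of_nat i * u) l \<le> (of_nat m * u) l" by (rule le_funD)
  then show "i \<le> m" using l by simp
qed (simp add: le_fun_def mult_le_mono1)

lemma scale_fun_inj: "u \<noteq> 0 \<Longrightarrow> of_nat m * u = of_nat m' * (u :: 'v \<Rightarrow> nat) \<Longrightarrow> m = m'"
  by (metis antisym order_refl scale_fun_le_iff)

lemma finite_scale_fun_le: "u \<noteq> 0 \<Longrightarrow> finite {i. of_nat i * u \<le> (g :: 'v \<Rightarrow> nat)}"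
proof -
  assume "u \<noteq> 0"
  then obtain l where l: "u l \<noteq> 0" by (auto simp: fun_eq_iff)
  have "i \<le> g l" if "of_nat i * u \<le> g" for i
    using le_funD[OF that, of l] l order.trans[of i "i * u l" "g l"] by simp
  then show ?thesis by (auto intro: finite_subset[of _ "{..g l}"])
qed

lemma fin_supp_scale_fun: "fin_supp u \<Longrightarrow> fin_supp (of_nat m * u)"
  unfolding fin_supp_def by (erule finite_subset[rotated]) auto

text \<open>\<^term>\<open>subst_monom G u\<close> is \<open>G(t\<^sup>u)\<close>; it is only meaningful for \<open>u \<noteq> 0\<close>.\<close>

lift_definition subst_monom :: "'a fps \<Rightarrow> ('v \<Rightarrow> nat) \<Rightarrow> ('v, 'a::comm_ring_1) mps" is
  "\<lambda>G u g. if fin_supp g \<and> u \<noteq> 0 \<and> (\<exists>m. g = of_nat m * u) then G $ (THE m. g = of_nat m * u) else 0"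
  by auto

lemma mcoeff_subst_monom_scale:
  assumes "fin_supp u" "u \<noteq> 0"
  shows "mcoeff (subst_monom G u) (of_nat m * u) = G $ m"
proof -
  have "(THE m'. of_nat m * u = of_nat m' * u) = m"
    using scale_fun_inj[OF assms(2)] by (intro the_equality) auto
  then show ?thesis using assms by transfer (auto simp: fin_supp_scale_fun)
qed

lemma mcoeff_subst_monom_other: "\<nexists>m. g = of_nat m * u \<Longrightarrow> mcoeff (subst_monom G u) g = 0"
  by transfer auto

lemma mcoeff_subst_monom_mult:
  assumes u: "fin_supp u" "u \<noteq> 0" and g: "fin_supp g"
  shows "mcoeff (subst_monom G u * h) g = (\<Sum>i | of_nat i * u \<le> g. G $ i * mcoeff h (g - of_nat i * u))"
proof -
  have "mcoeff (subst_monom G u * h) g = (\<Sum>w | w \<le> g. mcoeff (subst_monom G u) w * mcoeff h (g - w))"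
    using g by (rule mcoeff_mult)
  also have "\<dots> = (\<Sum>w \<in> (\<lambda>i. of_nat i * u) ` {i. of_nat i * u \<le> g}.
                    mcoeff (subst_monom G u) w * mcoeff h (g - w))"
  proof (rule sum.mono_neutral_right)
    show "\<forall>w \<in> {w. w \<le> g} - (\<lambda>i. of_nat i * u) ` {i. of_nat i * u \<le> g}.
        mcoeff (subst_monom G u) w * mcoeff h (g - w) = 0"
    proof
      fix w assume "w \<in> {w. w \<le> g} - (\<lambda>i. of_nat i * u) ` {i. of_nat i * u \<le> g}"
      then have "\<nexists>m. w = of_nat m * u" by auto
      then show "mcoeff (subst_monom G u) w * mcoeff h (g - w) = 0"
        by (simp add: mcoeff_subst_monom_other)
    qed
  qed (auto simp: finite_le_fin_supp[OF g])
  also have "\<dots> = (\<Sum>i | of_nat i * u \<le> g. G $ i * mcoeff h (g - of_nat i * u))"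
    using scale_fun_inj[OF u(2)]
    by (subst sum.reindex) (auto simp: inj_on_def mcoeff_subst_monom_scale[OF u])
  finally show ?thesis .
qed

lemma subst_monom_mult:
  fixes u :: "'v \<Rightarrow> nat"
  assumes u: "fin_supp u" "u \<noteq> 0"
  shows "subst_monom (G * H) u = subst_monom G u * subst_monom H u"
proof (rule mps_eqI)
  fix g :: "'v \<Rightarrow> nat" assume g: "fin_supp g"
  have prod: "mcoeff (subst_monom G u * subst_monom H u) g
      = (\<Sum>i | of_nat i * u \<le> g. G $ i * mcoeff (subst_monom H u) (g - of_nat i * u))"
    by (rule mcoeff_subst_monom_mult[OF u g])
  show "mcoeff (subst_monom (G * H) u) g = mcoeff (subst_monom G u * subst_monom H u) g"
  proof (cases "\<exists>m. g = of_nat m * u")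
    case True
    then obtain m where m: "g = of_nat m * u" by blast
    have "mcoeff (subst_monom G u * subst_monom H u) g = (\<Sum>i\<le>m. G $ i * H $ (m - i))"
      unfolding prod
    proof (rule sum.cong)
      show "{i. of_nat i * u \<le> g} = {..m}"
        using scale_fun_le_iff[OF u(2)] m by auto
      fix i
      have "g - of_nat i * u = of_nat (m - i) * u"
        by (auto simp: m fun_eq_iff diff_mult_distrib)
      then show "G $ i * mcoeff (subst_monom H u) (g - of_nat i * u) = G $ i * H $ (m - i)"
        by (simp only: mcoeff_subst_monom_scale[OF u])
    qed
    then show ?thesis
      by (simp add: m mcoeff_subst_monom_scale[OF u] fps_mult_nth atLeast0AtMost)
  next
    case False
    have "\<nexists>j. g - of_nat i * u = of_nat j * u" if "of_nat i * u \<le> g" for i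
    proof
      assume "\<exists>j. g - of_nat i * u = of_nat j * u"
      then obtain j where "g - of_nat i * u = of_nat j * u" by blast
      then have "g = of_nat (i + j) * u"
        using le_fun_add_diff[OF that] by (metis distrib_right of_nat_add)
      then show False using False by blast
    qed
    then show ?thesis
      unfolding prod using False by (simp add: mcoeff_subst_monom_other)
  qed
qed

lemma subst_monom_add: "subst_monom (G + H) u = subst_monom G u + subst_monom H u"
  by (rule mps_eqI) (transfer, auto)

lemma subst_monom_diff: "subst_monom (G - H) u = subst_monom G u - subst_monom H u"
  by (rule mps_eqI) (transfer, auto)

lemma subst_monom_uminus: "subst_monom (- G) u = - subst_monom G u"
  by (rule mps_eqI) (transfer, auto)

lemma subst_monom_1:
  fixes u :: "'v \<Rightarrow> nat"
  assumes u: "fin_supp u" "u \<noteq> 0"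
  shows "subst_monom 1 u = 1"
proof (rule mps_eqI)
  fix g :: "'v \<Rightarrow> nat"
  show "mcoeff (subst_monom 1 u) g = mcoeff 1 g"
  proof (cases "\<exists>m. g = of_nat m * u")
    case True
    then obtain m where m: "g = of_nat m * u" by blast
    have "g = 0 \<longleftrightarrow> m = 0"
      using scale_fun_inj[OF u(2), of m 0] by (auto simp: m)
    then show ?thesis by (simp add: m mcoeff_subst_monom_scale[OF u] mcoeff_1)
  next
    case False
    then have "g \<noteq> 0" by (metis mult_zero_left of_nat_0)
    then show ?thesis using False by (simp add: mcoeff_subst_monom_other mcoeff_1)
  qed
qed

lemma subst_monom_of_int:
  assumes u: "fin_supp u" "u \<noteq> 0"
  shows "subst_monom (of_int z) u = of_int z"
proof -
  have nat: "subst_monom (of_nat m) u = of_nat m" for m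
    by (induction m) (simp_all add: subst_monom_add subst_monom_1[OF u],
        rule mps_eqI, transfer, auto)
  then show ?thesis by (cases z rule: int_cases2) (simp_all add: subst_monom_uminus)
qed

lemma mcoeff_subst_monom_X:
  assumes u: "fin_supp u" "u \<noteq> 0"
  shows "mcoeff (subst_monom fps_X u) g = (if g = u then 1 else 0)"
proof (cases "\<exists>m. g = of_nat m * u")
  case True
  then obtain m where m: "g = of_nat m * u" by blast
  have "g = u \<longleftrightarrow> m = 1"
    using scale_fun_inj[OF u(2), of m 1] by (auto simp: m)
  then show ?thesis by (simp add: m mcoeff_subst_monom_scale[OF u])
next
  case False
  then have "g \<noteq> u" by (metis mult_1 of_nat_1)
  then show ?thesis using False by (simp add: mcoeff_subst_monom_other)
qed

lemma subst_monom_X_add: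
  fixes u :: "'v \<Rightarrow> nat"
  assumes u: "fin_supp u" "u \<noteq> 0" and v: "fin_supp v" "v \<noteq> 0"
  shows "subst_monom fps_X (u + v) = subst_monom fps_X u * subst_monom fps_X v"
proof (rule mps_eqI)
  fix g :: "'v \<Rightarrow> nat" assume g: "fin_supp g"
  have uv: "fin_supp (u + v)" "u + v \<noteq> 0"
    using u v by (auto simp: fin_supp_add fun_eq_iff)
  have "mcoeff (subst_monom fps_X u * subst_monom fps_X v) g
      = (\<Sum>w | w \<le> g. (if w = u then 1 else 0) * (if g - w = v then 1 else 0))"
    using g by (simp add: mcoeff_mult mcoeff_subst_monom_X[OF u] mcoeff_subst_monom_X[OF v])
  also have "\<dots> = (\<Sum>w | w \<le> g. if w = u then (if g - u = v then 1 else 0) else 0)"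
    by (intro sum.cong) auto
  also have "\<dots> = (if u \<le> g \<and> g - u = v then 1 else 0)"
    using finite_le_fin_supp[OF g] by (simp add: sum.delta)
  also have "\<dots> = (if g = u + v then 1 else 0)"
    by (auto simp: le_fun_def fun_eq_iff) (metis add_diff_inverse_nat not_less)
  also have "\<dots> = mcoeff (subst_monom fps_X (u + v)) g"
    by (simp only: mcoeff_subst_monom_X[OF uv])
  finally show "mcoeff (subst_monom fps_X (u + v)) g
      = mcoeff (subst_monom fps_X u * subst_monom fps_X v) g" ..
qed

definition decompositions :: "'l set \<Rightarrow> ('l \<Rightarrow> 'v \<Rightarrow> nat) \<Rightarrow> ('v \<Rightarrow> nat) \<Rightarrow> ('l \<Rightarrow> nat) set" where
  "decompositions A U g = {e. (\<forall>x. x \<notin> A \<longrightarrow> e x = 0) \<and> (\<forall>i. g i = (\<Sum>x\<in>A. e x * U x i))}"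

lemma finite_decompositions:
  assumes A: "finite A" and U: "\<forall>x\<in>A. U x \<noteq> 0"
  shows "finite (decompositions A U g)"
proof -
  have "\<forall>x\<in>A. \<exists>i. U x i \<noteq> 0"
    using U by (auto simp: fun_eq_iff)
  then obtain l where l: "\<And>x. x \<in> A \<Longrightarrow> U x (l x) \<noteq> 0"
    by metis
  let ?B = "\<Union>x\<in>A. {..g (l x)}"
  have "e x \<in> ?B" if e: "e \<in> decompositions A U g" and x: "x \<in> A" for e x
  proof -
    have "e x \<le> e x * U x (l x)" using l[OF x] by simp
    also have "\<dots> \<le> (\<Sum>y\<in>A. e y * U y (l x))" using A x by (intro member_le_sum) auto
    also have "\<dots> = g (l x)" using e by (simp add: decompositions_def)
    finally show ?thesis using x by blast
  qed
  then have "decompositions A U g \<subseteq> {e. \<forall>x. (x \<in> A \<longrightarrow> e x \<in> ?B) \<and> (x \<notin> A \<longrightarrow> e x = 0)}"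
    by (auto simp: decompositions_def)
  moreover have "finite {e. \<forall>x. (x \<in> A \<longrightarrow> e x \<in> ?B) \<and> (x \<notin> A \<longrightarrow> e x = 0)}"
    using A by (intro finite_set_of_finite_funs) auto
  ultimately show ?thesis by (rule finite_subset)
qed

lemma decompositions_empty: "decompositions {} U g = (if g = 0 then {0} else {})"
  by (auto simp: decompositions_def fun_eq_iff)

lemma bij_betw_decompositions_insert:
  assumes "finite A" "t \<notin> A"
  shows "bij_betw (\<lambda>(i, e). e(t := i))
    (SIGMA i:{i. of_nat i * U t \<le> g}. decompositions A U (g - of_nat i * U t))
    (decompositions (insert t A) U g)"
proof (rule bij_betw_byWitness[where f' = "\<lambda>e. (e t, e(t := 0))"])
  have sum_upd: "(\<Sum>x\<in>A. (if x = t then i else e x) * U x l) = (\<Sum>x\<in>A. e x * U x l)" for e i l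
    using assms by (intro sum.cong) auto
  show "(\<lambda>(i, e). e(t := i)) ` (SIGMA i:{i. of_nat i * U t \<le> g}. decompositions A U (g - of_nat i * U t))
      \<subseteq> decompositions (insert t A) U g"
  proof clarify
    fix i e assume i: "of_nat i * U t \<le> g" and e: "e \<in> decompositions A U (g - of_nat i * U t)"
    have "g l = i * U t l + (\<Sum>x\<in>A. e x * U x l)" for l
    proof -
      have "g l - i * U t l = (\<Sum>x\<in>A. e x * U x l)"
        using e by (simp add: decompositions_def)
      then show ?thesis using le_funD[OF i, of l] by simp
    qed
    then show "e(t := i) \<in> decompositions (insert t A) U g"
      using e assms by (auto simp: decompositions_def sum_upd)
  qed
  show "(\<lambda>e. (e t, e(t := 0))) ` decompositions (insert t A) U g
      \<subseteq> (SIGMA i:{i. of_nat i * U t \<le> g}. decompositions A U (g - of_nat i * U t))"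
  proof (rule image_subsetI)
    fix e assume e: "e \<in> decompositions (insert t A) U g"
    then have g: "g l = e t * U t l + (\<Sum>x\<in>A. e x * U x l)" for l
      using assms by (simp add: decompositions_def)
    have supp: "\<forall>x. x \<notin> A \<longrightarrow> (e(t := 0)) x = 0"
      using e by (simp add: decompositions_def)
    have "of_nat (e t) * U t \<le> g"
      by (simp add: le_fun_def g)
    moreover have "e(t := 0) \<in> decompositions A U (g - of_nat (e t) * U t)"
      unfolding decompositions_def using supp by (simp add: g sum_upd)
    ultimately show "(e t, e(t := 0))
        \<in> (SIGMA i:{i. of_nat i * U t \<le> g}. decompositions A U (g - of_nat i * U t))"
      by simp
  qed
qed (auto simp: decompositions_def fun_eq_iff assms)

lemma mcoeff_prod_subst_monom:
  assumes "finite A" and "\<forall>x\<in>A. fin_supp (U x) \<and> U x \<noteq> 0" and "fin_supp g"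
  shows "mcoeff (\<Prod>x\<in>A. subst_monom (G x) (U x)) g = (\<Sum>e\<in>decompositions A U g. \<Prod>x\<in>A. G x $ e x)"
  using assms
proof (induction A arbitrary: g rule: finite_induct)
  case empty
  then show ?case by (simp add: decompositions_empty mcoeff_1)
next
  case (insert t A)
  have t: "fin_supp (U t)" "U t \<noteq> 0" and UA: "\<forall>x\<in>A. fin_supp (U x) \<and> U x \<noteq> 0"
    using insert.prems(1) by blast+
  let ?I = "{i. of_nat i * U t \<le> g}"
  let ?D = "\<lambda>i. decompositions A U (g - of_nat i * U t)"
  have "mcoeff (\<Prod>x\<in>insert t A. subst_monom (G x) (U x)) g
      = (\<Sum>i\<in>?I. G t $ i * mcoeff (\<Prod>x\<in>A. subst_monom (G x) (U x)) (g - of_nat i * U t))"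
    using insert.hyps by (simp add: mcoeff_subst_monom_mult[OF t insert.prems(2)])
  also have "\<dots> = (\<Sum>i\<in>?I. \<Sum>e\<in>?D i. G t $ i * (\<Prod>x\<in>A. G x $ e x))"
    using insert.IH[OF UA fin_supp_diff[OF insert.prems(2)]] by (simp only: sum_distrib_left)
  also have "\<dots> = (\<Sum>(i, e)\<in>Sigma ?I ?D. G t $ i * (\<Prod>x\<in>A. G x $ e x))"
  proof (rule sum.Sigma)
    show "finite ?I" by (rule finite_scale_fun_le[OF t(2)])
    have "\<forall>x\<in>A. U x \<noteq> 0" using UA by blast
    then show "\<forall>i\<in>?I. finite (?D i)"
      using finite_decompositions[OF insert.hyps(1)] by blast
  qed
  also have "\<dots> = (\<Sum>(i, e)\<in>Sigma ?I ?D. \<Prod>x\<in>insert t A. G x $ (e(t := i)) x)"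
  proof -
    have "(\<Prod>x\<in>A. G x $ (e(t := i)) x) = (\<Prod>x\<in>A. G x $ e x)" for i e
      using insert.hyps(2) by (intro prod.cong) auto
    then show ?thesis using insert.hyps by simp
  qed
  also have "\<dots> = (\<Sum>e\<in>decompositions (insert t A) U g. \<Prod>x\<in>insert t A. G x $ e x)"
    using sum.reindex_bij_betw[OF bij_betw_decompositions_insert[OF insert.hyps],
        of "\<lambda>e. \<Prod>x\<in>insert t A. G x $ e x"]
    by (simp add: case_prod_beta)
  finally show ?case .
qed

text \<open>With \<open>l = x_degree k\<close> (defined below) this is the Euler operator \<open>x\<^sub>k \<partial>/\<partial>x\<^sub>k\<close>.\<close>

lift_definition euler_op :: "(('v \<Rightarrow> nat) \<Rightarrow> int) \<Rightarrow> ('v, 'a::comm_ring_1) mps \<Rightarrow> ('v, 'a) mps"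
  is "\<lambda>l f g. of_int (l g) * f g" by simp

lemma mcoeff_euler_op [simp]: "mcoeff (euler_op l f) g = of_int (l g) * mcoeff f g"
  by transfer simp

lemma euler_op_mult:
  fixes l :: "('v \<Rightarrow> nat) \<Rightarrow> int"
  assumes l: "\<And>u v. l (u + v) = l u + l v"
  shows "euler_op l (f * h) = euler_op l f * h + f * euler_op l h"
proof (rule mps_eqI)
  fix g :: "'v \<Rightarrow> nat" assume g: "fin_supp g"
  have "of_int (l g) * (mcoeff f u * mcoeff h (g - u))
      = of_int (l u) * mcoeff f u * mcoeff h (g - u) + mcoeff f u * (of_int (l (g - u)) * mcoeff h (g - u))"
    if "u \<le> g" for u
    using l[of u "g - u"] by (simp add: le_fun_add_diff[OF that] algebra_simps)
  then show "mcoeff (euler_op l (f * h)) g = mcoeff (euler_op l f * h + f * euler_op l h) g"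
    using g by (simp add: mcoeff_mult sum_distrib_left sum.distrib[symmetric])
qed

lemma euler_op_prod:
  assumes l: "\<And>u v. l (u + v) = l u + l v"
    and "finite A" and "\<And>a. a \<in> A \<Longrightarrow> euler_op l (F a) = F a * H a"
  shows "euler_op l (\<Prod>a\<in>A. F a) = (\<Prod>a\<in>A. F a) * (\<Sum>a\<in>A. H a)"
  using assms(2,3)
proof (induction A rule: finite_induct)
  case empty
  have "l 0 = 0" using l[of 0 0] by simp
  then have "mcoeff (euler_op l 1) g = mcoeff 0 g" for g
    by (cases "g = 0") (simp_all add: mcoeff_1)
  then have "euler_op l 1 = 0" by (intro mps_eqI)
  then show ?case by simp
next
  case (insert x A)
  then show ?case by (simp add: euler_op_mult[OF l] algebra_simps)
qed

lemma additive_scale_fun: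
  fixes l :: "('v \<Rightarrow> nat) \<Rightarrow> int"
  assumes l: "\<And>u v. l (u + v) = l u + l v"
  shows "l (of_nat m * u) = int m * l u"
proof (induction m)
  case 0
  have "l 0 = 0" using l[of 0 0] by simp
  then show ?case by (simp only: of_nat_0 mult_zero_left)
next
  case (Suc m)
  have "of_nat (Suc m) * u = u + of_nat m * u"
    by (simp only: of_nat_Suc distrib_right mult_1_left)
  then have "l (of_nat (Suc m) * u) = l u + l (of_nat m * u)"
    by (simp only: l)
  also have "\<dots> = int (Suc m) * l u"
    unfolding Suc.IH by (simp add: algebra_simps)
  finally show ?case .
qed

lemma euler_op_subst_monom:
  assumes l: "\<And>u v. l (u + v) = l u + l v" and u: "fin_supp u" "u \<noteq> 0"
  shows "euler_op l (subst_monom G u) = of_int (l u) * subst_monom (fps_X * fps_deriv G) u"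
proof (rule mps_eqI)
  fix g
  show "mcoeff (euler_op l (subst_monom G u)) g = mcoeff (of_int (l u) * subst_monom (fps_X * fps_deriv G) u) g"
  proof (cases "\<exists>m. g = of_nat m * u")
    case True
    then obtain m where "g = of_nat m * u" by blast
    then show ?thesis
      by (simp add: mcoeff_of_int_mult mcoeff_subst_monom_scale[OF u]
          additive_scale_fun[OF l] fps_mult_fps_X_deriv_shift mult.assoc)
  qed (simp add: mcoeff_of_int_mult mcoeff_subst_monom_other)
qed

section \<open>The univariate series \<open>(1 - X)\<^bsup>-b\<^esup>\<close>, \<open>1/(1 - X)\<close> and \<open>X/(1 - X)\<close>\<close>

definition negbin_fps :: "nat \<Rightarrow> real fps" where
  "negbin_fps b = Abs_fps (nb b)"

definition geom_fps :: "'a::comm_ring_1 fps" where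
  "geom_fps = Abs_fps (\<lambda>_. 1)"

definition geom_tail_fps :: "'a::comm_ring_1 fps" where
  "geom_tail_fps = Abs_fps (\<lambda>m. if m = 0 then 0 else 1)"

lemma geom_fps_inverse: "(1 - fps_X) * geom_fps = 1"
  by (rule fps_ext) (simp add: geom_fps_def algebra_simps)

lemma geom_tail_fps_eq: "geom_tail_fps = fps_X * geom_fps"
  by (rule fps_ext) (simp add: geom_fps_def geom_tail_fps_def)

lemma nb_Suc: "nb b (Suc m) * real (Suc m) = nb b m * (real b + real m)"
proof -
  have "nb b (Suc m) * real (Suc m)
      = pochhammer (real b) m * (real b + real m) / (real (Suc m) * fact m) * real (Suc m)"
    by (simp only: nb_def pochhammer_Suc fact_Suc of_nat_mult)
  also have "\<dots> = nb b m * (real b + real m)"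
    by (simp add: nb_def del: of_nat_Suc)
  finally show ?thesis .
qed

lemma negbin_fps_deriv: "fps_X * fps_deriv (negbin_fps b) = of_nat b * geom_tail_fps * negbin_fps b"
proof -
  have key: "(1 - fps_X) * (fps_X * fps_deriv (negbin_fps b)) = of_nat b * (fps_X * negbin_fps b)"
  proof (rule fps_ext)
    fix m
    show "((1 - fps_X) * (fps_X * fps_deriv (negbin_fps b))) $ m = (of_nat b * (fps_X * negbin_fps b)) $ m"
    proof (cases m)
      case (Suc k)
      then show ?thesis
        using nb_Suc[of b k]
        by (cases k) (simp_all add: negbin_fps_def fps_mult_fps_X_deriv_shift algebra_simps
            fps_of_nat[symmetric] del: fps_of_nat)
    qed (simp add: fps_mult_nth)
  qed
  have "fps_X * fps_deriv (negbin_fps b) = ((1 - fps_X) * geom_fps) * (fps_X * fps_deriv (negbin_fps b))"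
    by (simp only: geom_fps_inverse mult_1_left)
  also have "\<dots> = geom_fps * ((1 - fps_X) * (fps_X * fps_deriv (negbin_fps b)))"
    by (simp only: ac_simps)
  also have "\<dots> = of_nat b * geom_tail_fps * negbin_fps b"
    unfolding key geom_tail_fps_eq by (simp only: ac_simps)
  finally show ?thesis .
qed

section \<open>An identity for elementary symmetric functions\<close>

definition card_subsets :: "'i set \<Rightarrow> nat \<Rightarrow> 'i set set" where
  "card_subsets N r = {R. R \<subseteq> N \<and> card R = r}"

definition esym :: "'i set \<Rightarrow> nat \<Rightarrow> ('i \<Rightarrow> 'a::comm_ring_1) \<Rightarrow> 'a" where
  "esym N r y = (\<Sum>R\<in>card_subsets N r. \<Prod>i\<in>R. y i)"

lemma finite_card_subsets: "finite N \<Longrightarrow> finite (card_subsets N r)"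
  unfolding card_subsets_def by (rule finite_subset[of _ "Pow N"]) auto

lemma sum_card_subsets_shift:
  assumes "finite N"
  shows "(\<Sum>R\<in>card_subsets N r. \<Sum>k\<in>N - R. H R k)
       = (\<Sum>S\<in>card_subsets N (Suc r). \<Sum>k\<in>S. H (S - {k}) k)"
proof -
  have fin: "finite R" if "R \<in> card_subsets N m" for R m
    using that assms by (auto simp: card_subsets_def intro: finite_subset)
  have "(\<Sum>R\<in>card_subsets N r. \<Sum>k\<in>N - R. H R k) = (\<Sum>(R, k)\<in>(SIGMA R:card_subsets N r. N - R). H R k)"
    using assms by (intro sum.Sigma finite_card_subsets) auto
  also have "\<dots> = (\<Sum>(S, k)\<in>(SIGMA S:card_subsets N (Suc r). S). H (S - {k}) k)"
  proof (rule sum.reindex_bij_witness[of _ "\<lambda>(S, k). (S - {k}, k)" "\<lambda>(R, k). (insert k R, k)"],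
      goal_cases)
    case (1 p)
    then show ?case by auto
  next
    case (2 p)
    then show ?case using fin[of "fst p" r] by (auto simp: card_subsets_def)
  next
    case (3 p)
    then show ?case by auto
  next
    case (4 p)
    then show ?case using fin[of "fst p" "Suc r"] by (auto simp: card_subsets_def)
  next
    case (5 p)
    then show ?case by auto
  qed
  also have "\<dots> = (\<Sum>S\<in>card_subsets N (Suc r). \<Sum>k\<in>S. H (S - {k}) k)"
    using assms fin by (intro sum.Sigma[symmetric] finite_card_subsets) auto
  finally show ?thesis .
qed

lemma sum_card_subsets_extend:
  assumes "finite N"
  shows "(\<Sum>R\<in>card_subsets N r. \<Sum>k\<in>N - R. (\<Prod>i\<in>R. y i) * y k) = of_nat (Suc r) * esym N (Suc r) y"
proof -
  have "(\<Sum>k\<in>S. (\<Prod>i\<in>S - {k}. y i) * y k) = of_nat (Suc r) * (\<Prod>i\<in>S. y i)"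
    if "S \<in> card_subsets N (Suc r)" for S
  proof -
    have S: "finite S" "card S = Suc r"
      using that assms by (auto simp: card_subsets_def intro: finite_subset)
    have "(\<Sum>k\<in>S. (\<Prod>i\<in>S - {k}. y i) * y k) = (\<Sum>k\<in>S. \<Prod>i\<in>S. y i)"
      using S by (intro sum.cong refl) (simp add: prod.remove mult.commute)
    then show ?thesis using S by simp
  qed
  then show ?thesis
    by (simp add: sum_card_subsets_shift[OF assms] esym_def sum_distrib_left)
qed

lemma sum_pairs_antisym:
  fixes w :: "'i \<Rightarrow> 'i \<Rightarrow> 'a::comm_ring_1"
  assumes "finite T" and "\<And>j k. j \<in> T \<Longrightarrow> k \<in> T \<Longrightarrow> j \<noteq> k \<Longrightarrow> w k j + w j k = -1"
  shows "(\<Sum>k\<in>T. \<Sum>j\<in>T - {k}. w k j) = - of_nat (card T choose 2)"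
  using assms
proof (induction T rule: finite_induct)
  case empty
  then show ?case by (simp add: numeral_2_eq_2)
next
  case (insert t T)
  have IH: "(\<Sum>k\<in>T. \<Sum>j\<in>T - {k}. w k j) = - of_nat (card T choose 2)"
    by (rule insert.IH) (auto intro: insert.prems)
  have pairs: "(\<Sum>j\<in>T. w t j + w j t) = (\<Sum>j\<in>T. - 1)"
    using insert.hyps(2) by (intro sum.cong refl insert.prems) auto
  have "(\<Sum>k\<in>insert t T. \<Sum>j\<in>insert t T - {k}. w k j)
      = (\<Sum>j\<in>T. w t j) + (\<Sum>k\<in>T. w k t + (\<Sum>j\<in>T - {k}. w k j))"
    using insert.hyps by (auto simp: insert_Diff_if intro!: sum.cong)
  also have "\<dots> = (\<Sum>j\<in>T. w t j + w j t) + (\<Sum>k\<in>T. \<Sum>j\<in>T - {k}. w k j)"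
    by (simp add: sum.distrib)
  also have "\<dots> = - of_nat (card T) - of_nat (card T choose 2)"
    by (simp add: pairs IH)
  finally show ?case
    using insert.hyps by (simp add: numeral_2_eq_2 algebra_simps)
qed

lemma sum_pairs_weighted:
  fixes w :: "'i \<Rightarrow> 'i \<Rightarrow> 'a::comm_ring_1"
  assumes "finite S"
    and "\<And>j k. j \<in> S \<Longrightarrow> k \<in> S \<Longrightarrow> j \<noteq> k \<Longrightarrow> y j * w k j + y k * w j k = y j * y k"
  shows "(\<Sum>k\<in>S. \<Sum>j\<in>S - {k}. (\<Prod>i\<in>S - {k}. y i) * w k j) = of_nat (card S choose 2) * (\<Prod>i\<in>S. y i)"
  using assms
proof (induction S rule: finite_induct)
  case empty
  then show ?case by (simp add: numeral_2_eq_2)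
next
  case (insert t T)
  let ?P = "\<lambda>A. \<Prod>i\<in>A. y i"
  have remove: "?P T = y k * ?P (T - {k})" if "k \<in> T" for k
    using insert.hyps that by (simp add: prod.remove)
  have IH: "(\<Sum>k\<in>T. \<Sum>j\<in>T - {k}. ?P (T - {k}) * w k j) = of_nat (card T choose 2) * ?P T"
    by (rule insert.IH) (auto intro: insert.prems)
  have pairs: "?P (T - {k}) * (y k * w t k + y t * w k t) = y t * ?P T" if "k \<in> T" for k
  proof -
    have "y k * w t k + y t * w k t = y k * y t"
      using insert.prems[of k t] that insert.hyps(2) by auto
    then show ?thesis using remove[OF that] by (simp add: algebra_simps)
  qed
  have "(\<Sum>k\<in>insert t T. \<Sum>j\<in>insert t T - {k}. ?P (insert t T - {k}) * w k j)
      = (\<Sum>j\<in>T. ?P T * w t j) + (\<Sum>k\<in>T. y t * ?P (T - {k}) * w k t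
          + y t * (\<Sum>j\<in>T - {k}. ?P (T - {k}) * w k j))"
    using insert.hyps
    by (auto simp: insert_Diff_if sum_distrib_left algebra_simps intro!: sum.cong)
  also have "\<dots> = (\<Sum>k\<in>T. ?P (T - {k}) * (y k * w t k + y t * w k t))
      + y t * (\<Sum>k\<in>T. \<Sum>j\<in>T - {k}. ?P (T - {k}) * w k j)"
    by (simp add: remove sum.distrib sum_distrib_left algebra_simps cong: sum.cong)
  also have "\<dots> = (\<Sum>k\<in>T. y t * ?P T) + y t * (of_nat (card T choose 2) * ?P T)"
    by (simp add: pairs IH cong: sum.cong)
  also have "\<dots> = of_nat (card (insert t T) choose 2) * ?P (insert t T)"
    using insert.hyps by (simp add: numeral_2_eq_2 algebra_simps)
  finally show ?case .
qed

lemma card_subsets_finite_subset: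
  "finite N \<Longrightarrow> R \<in> card_subsets N m \<Longrightarrow> finite R \<and> R \<subseteq> N"
  by (auto simp: card_subsets_def intro: finite_subset)

lemma sum_card_subsets_pairs_outside:
  fixes y :: "'i \<Rightarrow> 'a::comm_ring_1" and w :: "'i \<Rightarrow> 'i \<Rightarrow> 'a"
  assumes N: "finite N"
    and w_antisym: "\<And>j k. j \<in> N \<Longrightarrow> k \<in> N \<Longrightarrow> j \<noteq> k \<Longrightarrow> w k j + w j k = -1"
  shows "(\<Sum>R\<in>card_subsets N r. \<Sum>k\<in>N - R. (\<Prod>i\<in>R. y i) * (\<Sum>j\<in>N - R - {k}. w k j))
       = - of_nat (card N - r choose 2) * esym N r y"
proof -
  have "(\<Sum>k\<in>N - R. (\<Prod>i\<in>R. y i) * (\<Sum>j\<in>N - R - {k}. w k j))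
      = - of_nat (card N - r choose 2) * (\<Prod>i\<in>R. y i)"
    if "R \<in> card_subsets N r" for R
  proof -
    have "card (N - R) = card N - r"
      using that card_subsets_finite_subset[OF N that] by (simp add: card_subsets_def card_Diff_subset)
    moreover have "(\<Sum>k\<in>N - R. \<Sum>j\<in>N - R - {k}. w k j) = - of_nat (card (N - R) choose 2)"
      using N w_antisym by (intro sum_pairs_antisym) auto
    ultimately show ?thesis by (simp add: sum_distrib_left[symmetric] mult.commute)
  qed
  then show ?thesis by (simp add: esym_def sum_distrib_left)
qed

lemma sum_card_subsets_pairs_meeting:
  fixes y :: "'i \<Rightarrow> 'a::comm_ring_1" and w :: "'i \<Rightarrow> 'i \<Rightarrow> 'a"
  assumes N: "finite N"
    and w_weighted: "\<And>j k. j \<in> N \<Longrightarrow> k \<in> N \<Longrightarrow> j \<noteq> k \<Longrightarrow> y j * w k j + y k * w j k = y j * y k"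
  shows "(\<Sum>R\<in>card_subsets N r. \<Sum>k\<in>N - R. \<Sum>j\<in>R. (\<Prod>i\<in>R. y i) * w k j)
       = of_nat (Suc r choose 2) * esym N (Suc r) y"
proof -
  have "(\<Sum>k\<in>S. \<Sum>j\<in>S - {k}. (\<Prod>i\<in>S - {k}. y i) * w k j) = of_nat (Suc r choose 2) * (\<Prod>i\<in>S. y i)"
    if "S \<in> card_subsets N (Suc r)" for S
    using sum_pairs_weighted[of S y w] w_weighted card_subsets_finite_subset[OF N that] that
    by (auto simp: card_subsets_def)
  then show ?thesis
    by (simp add: sum_card_subsets_shift[OF N] esym_def sum_distrib_left)
qed

text \<open>Split \<open>\<Sum>\<^sub>j\<^sub>\<noteq>\<^sub>k w k j\<close> into the pairs inside \<open>N - R\<close>, which only see \<open>w k j + w j k = -1\<close>,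
  and the pairs meeting \<open>R\<close>, which only see \<open>y\<^sub>j w k j + y\<^sub>k w j k = y\<^sub>j y\<^sub>k\<close>.\<close>

lemma esym_recurrence_identity:
  fixes y :: "'i \<Rightarrow> 'a::comm_ring_1" and w :: "'i \<Rightarrow> 'i \<Rightarrow> 'a"
  assumes N: "finite N"
    and w_antisym: "\<And>j k. j \<in> N \<Longrightarrow> k \<in> N \<Longrightarrow> j \<noteq> k \<Longrightarrow> w k j + w j k = -1"
    and w_weighted: "\<And>j k. j \<in> N \<Longrightarrow> k \<in> N \<Longrightarrow> j \<noteq> k \<Longrightarrow> y j * w k j + y k * w j k = y j * y k"
  shows "(\<Sum>R\<in>card_subsets N r. \<Sum>k\<in>N - R. (\<Prod>i\<in>R. y i) * (B * y k + C * (\<Sum>j\<in>N - {k}. w k j)))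
    = (B * of_nat (Suc r) + C * of_nat (Suc r choose 2)) * esym N (Suc r) y
      - C * of_nat (card N - r choose 2) * esym N r y"
proof -
  let ?P = "\<lambda>R. \<Prod>i\<in>R. y i"
  have split: "?P R * (B * y k + C * (\<Sum>j\<in>N - {k}. w k j))
      = B * (?P R * y k) + C * (?P R * (\<Sum>j\<in>N - R - {k}. w k j)) + C * (\<Sum>j\<in>R. ?P R * w k j)"
    if "R \<in> card_subsets N r" "k \<in> N - R" for R k
  proof -
    have R: "finite R" "R \<subseteq> N" using card_subsets_finite_subset[OF N that(1)] by auto
    have "(\<Sum>j\<in>N - R - {k}. w k j) + (\<Sum>j\<in>R. w k j) = (\<Sum>j\<in>(N - R - {k}) \<union> R. w k j)"
      using N R by (intro sum.union_disjoint[symmetric]) auto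
    also have "(N - R - {k}) \<union> R = N - {k}" using that R by auto
    finally have "(\<Sum>j\<in>N - {k}. w k j) = (\<Sum>j\<in>N - R - {k}. w k j) + (\<Sum>j\<in>R. w k j)" ..
    then show ?thesis by (simp add: algebra_simps sum_distrib_left)
  qed
  have outside: "(\<Sum>R\<in>card_subsets N r. \<Sum>k\<in>N - R. ?P R * (\<Sum>j\<in>N - R - {k}. w k j))
      = - of_nat (card N - r choose 2) * esym N r y"
    using N w_antisym by (rule sum_card_subsets_pairs_outside)
  have meeting: "(\<Sum>R\<in>card_subsets N r. \<Sum>k\<in>N - R. \<Sum>j\<in>R. ?P R * w k j)
      = of_nat (Suc r choose 2) * esym N (Suc r) y"
    using N w_weighted by (rule sum_card_subsets_pairs_meeting)
  have "(\<Sum>R\<in>card_subsets N r. \<Sum>k\<in>N - R. ?P R * (B * y k + C * (\<Sum>j\<in>N - {k}. w k j)))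
      = (\<Sum>R\<in>card_subsets N r. \<Sum>k\<in>N - R. B * (?P R * y k)
          + C * (?P R * (\<Sum>j\<in>N - R - {k}. w k j)) + C * (\<Sum>j\<in>R. ?P R * w k j))"
    by (intro sum.cong refl split)
  also have "\<dots> = B * (\<Sum>R\<in>card_subsets N r. \<Sum>k\<in>N - R. ?P R * y k)
        + C * (\<Sum>R\<in>card_subsets N r. \<Sum>k\<in>N - R. ?P R * (\<Sum>j\<in>N - R - {k}. w k j))
        + C * (\<Sum>R\<in>card_subsets N r. \<Sum>k\<in>N - R. \<Sum>j\<in>R. ?P R * w k j)"
    by (simp only: sum.distrib sum_distrib_left)
  also have "\<dots> = B * (of_nat (Suc r) * esym N (Suc r) y)
      + C * (- of_nat (card N - r choose 2) * esym N r y)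
      + C * (of_nat (Suc r choose 2) * esym N (Suc r) y)"
    by (simp only: sum_card_subsets_extend[OF N] outside meeting)
  also have "\<dots> = (B * of_nat (Suc r) + C * of_nat (Suc r choose 2)) * esym N (Suc r) y
      - C * of_nat (card N - r choose 2) * esym N r y"
    by (simp add: algebra_simps)
  finally show ?thesis .
qed

section \<open>The change of variables\<close>

text \<open>Put \<open>x\<^sub>i = t\<^sub>i t\<^sub>i\<^sub>+\<^sub>1 \<cdots> t\<^sub>n\<^sub>-\<^sub>1\<close>. Then \<open>x\<^sub>i / x\<^sub>j = t\<^sub>i \<cdots> t\<^sub>j\<^sub>-\<^sub>1\<close> for \<open>i < j\<close>, so the Laurent expansion in the
  region \<open>|x\<^sub>0| < \<cdots> < |x\<^sub>n\<^sub>-\<^sub>1|\<close> used by the iterated constant term becomes an honest power series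
  in \<open>t\<close>, and the monomial \<open>t\<^sup>g\<close> equals \<open>\<Prod>\<^sub>k x\<^sub>k\<^bsup>g k - g (k - 1)\<^esup>\<close>. The constant term of
  \<open>F \<Prod>\<^sub>k x\<^sub>k\<^bsup>-(a - 1 + c k)\<^esup>\<close> is therefore the coefficient of \<open>t\<^bsup>ct_exp n a c\<^esup>\<close> in \<open>F\<close>.\<close>

type_synonym tseries = "(nat, real) mps"

definition x_exp :: "nat \<Rightarrow> nat \<Rightarrow> nat \<Rightarrow> nat" where
  "x_exp n i = (\<lambda>l. if i \<le> l \<and> l < n then 1 else 0)"

definition ratio_exp :: "nat \<Rightarrow> nat \<Rightarrow> nat \<Rightarrow> nat" where
  "ratio_exp i j = (\<lambda>l. if i \<le> l \<and> l < j then 1 else 0)"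

definition x_degree :: "nat \<Rightarrow> (nat \<Rightarrow> nat) \<Rightarrow> int" where
  "x_degree k g = int (g k) - (if k = 0 then 0 else int (g (k - 1)))"

definition ct_exp :: "nat \<Rightarrow> nat \<Rightarrow> nat \<Rightarrow> nat \<Rightarrow> nat" where
  "ct_exp n a c = (\<lambda>l. if l < n then (\<Sum>k\<le>l. a - 1 + c * k) else 0)"

lemma fin_supp_x_exp: "fin_supp (x_exp n i)"
  unfolding fin_supp_def x_exp_def by (rule finite_subset[of _ "{..<n}"]) auto

lemma x_exp_neq_0:
  assumes "i < n"
  shows "x_exp n i \<noteq> 0"
proof
  assume "x_exp n i = 0"
  then have "x_exp n i i = 0" by simp
  then show False using assms by (simp add: x_exp_def)
qed

lemma fin_supp_ratio_exp: "fin_supp (ratio_exp i j)"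
  unfolding fin_supp_def ratio_exp_def by (rule finite_subset[of _ "{..<j}"]) auto

lemma ratio_exp_neq_0:
  assumes "i < j"
  shows "ratio_exp i j \<noteq> 0"
proof
  assume "ratio_exp i j = 0"
  then have "ratio_exp i j i = 0" by simp
  then show False using assms by (simp add: ratio_exp_def)
qed

lemma x_exp_split: "k < j \<Longrightarrow> j < n \<Longrightarrow> x_exp n k = ratio_exp k j + x_exp n j"
  unfolding x_exp_def ratio_exp_def by auto

lemma x_degree_add: "x_degree k (u + v) = x_degree k u + x_degree k v"
  unfolding x_degree_def by simp

lemma x_degree_x_exp: "k < n \<Longrightarrow> x_degree k (x_exp n i) = (if k = i then 1 else 0)"
  unfolding x_degree_def x_exp_def by auto

lemma x_degree_ratio_exp:
  "i < j \<Longrightarrow> x_degree k (ratio_exp i j) = (if k = i then 1 else 0) - (if k = j then 1 else 0)"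
  unfolding x_degree_def ratio_exp_def by auto

lemma x_degree_ct_exp: "k < n \<Longrightarrow> x_degree k (ct_exp n a c) = int (a - 1 + c * k)"
  by (cases k) (simp_all add: x_degree_def ct_exp_def)

lemma sum_triangle_delta:
  fixes f :: "nat \<Rightarrow> nat \<Rightarrow> 'a::ab_group_add"
  assumes "k < n"
  shows "(\<Sum>j<n. \<Sum>i<j. (if k = i then f i j else 0) - (if k = j then f i j else 0))
       = (\<Sum>j\<in>{k<..<n}. f k j) - (\<Sum>i<k. f i k)"
proof -
  have "(\<Sum>j<n. \<Sum>i<j. if k = i then f i j else 0) = (\<Sum>j<n. if k < j then f k j else 0)"
    by (intro sum.cong refl) (simp add: sum.delta)
  also have "\<dots> = (\<Sum>j\<in>{k<..<n}. f k j)"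
    by (simp add: sum.If_cases) (intro sum.cong, auto)
  finally have upper: "(\<Sum>j<n. \<Sum>i<j. if k = i then f i j else 0) = (\<Sum>j\<in>{k<..<n}. f k j)" .
  have "(\<Sum>j<n. \<Sum>i<j. if k = j then f i j else 0) = (\<Sum>j<n. if k = j then (\<Sum>i<j. f i j) else 0)"
    by (intro sum.cong refl) simp
  also have "\<dots> = (\<Sum>i<k. f i k)" using assms by (simp add: sum.delta)
  finally show ?thesis using upper by (simp add: sum_subtractf)
qed

definition yfrac :: "(nat \<Rightarrow> nat) \<Rightarrow> tseries" where
  "yfrac u = subst_monom geom_tail_fps u"

definition integrand :: "nat \<Rightarrow> nat \<Rightarrow> nat \<Rightarrow> tseries" where
  "integrand n b c = (\<Prod>i<n. subst_monom (negbin_fps b) (x_exp n i))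
                   * (\<Prod>j<n. \<Prod>i<j. subst_monom (negbin_fps c) (ratio_exp i j))"

lemma subst_monom_geom_inverse:
  "fin_supp u \<Longrightarrow> u \<noteq> 0 \<Longrightarrow> (1 - subst_monom fps_X u) * subst_monom geom_fps u = (1 :: tseries)"
  using arg_cong[OF geom_fps_inverse, of "\<lambda>F. subst_monom F u"]
  by (simp add: subst_monom_mult subst_monom_diff subst_monom_1)

lemma yfrac_eq: "fin_supp u \<Longrightarrow> u \<noteq> 0 \<Longrightarrow> yfrac u = subst_monom fps_X u * subst_monom geom_fps u"
  by (simp add: yfrac_def geom_tail_fps_eq subst_monom_mult)

lemma euler_op_subst_negbin:
  assumes l: "\<And>u v. l (u + v) = l u + l v" and u: "fin_supp u" "u \<noteq> 0"
  shows "euler_op l (subst_monom (negbin_fps b) u)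
       = subst_monom (negbin_fps b) u * (of_int (l u) * of_nat b * yfrac u)"
proof -
  have "subst_monom (of_nat b :: real fps) u = of_nat b"
    using subst_monom_of_int[OF u, of "int b"] by simp
  then have "subst_monom (of_nat b * geom_tail_fps * negbin_fps b) u
      = of_nat b * yfrac u * subst_monom (negbin_fps b) u"
    by (simp only: subst_monom_mult[OF u] yfrac_def)
  then show ?thesis
    by (simp add: euler_op_subst_monom[OF l u] negbin_fps_deriv algebra_simps)
qed

lemma euler_op_integrand:
  assumes k: "k < n"
  shows "euler_op (x_degree k) (integrand n b c) = integrand n b c
    * (of_nat b * yfrac (x_exp n k)
       + of_nat c * ((\<Sum>j\<in>{k<..<n}. yfrac (ratio_exp k j)) - (\<Sum>i<k. yfrac (ratio_exp i k))))"
proof -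
  let ?A = "\<Prod>i<n. subst_monom (negbin_fps b) (x_exp n i)"
  let ?F = "\<lambda>j. \<Prod>i<j. subst_monom (negbin_fps c) (ratio_exp i j)"
  let ?h = "\<lambda>i j. of_int (x_degree k (ratio_exp i j)) * of_nat c * yfrac (ratio_exp i j)"
  have dA: "euler_op (x_degree k) ?A
      = ?A * (\<Sum>i<n. of_int (x_degree k (x_exp n i)) * of_nat b * yfrac (x_exp n i))"
    by (rule euler_op_prod[OF x_degree_add])
       (simp_all add: euler_op_subst_negbin[OF x_degree_add fin_supp_x_exp x_exp_neq_0])
  have dF: "euler_op (x_degree k) (?F j) = ?F j * (\<Sum>i<j. ?h i j)" for j
    by (rule euler_op_prod[OF x_degree_add])
       (simp_all add: euler_op_subst_negbin[OF x_degree_add fin_supp_ratio_exp ratio_exp_neq_0])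
  have dB: "euler_op (x_degree k) (\<Prod>j<n. ?F j) = (\<Prod>j<n. ?F j) * (\<Sum>j<n. \<Sum>i<j. ?h i j)"
    by (rule euler_op_prod[OF x_degree_add]) (simp_all add: dF)
  have "of_int (x_degree k (x_exp n i)) * of_nat b * yfrac (x_exp n i)
      = (if k = i then of_nat b * yfrac (x_exp n i) else 0)" for i
    using k by (simp add: x_degree_x_exp)
  then have sA: "(\<Sum>i<n. of_int (x_degree k (x_exp n i)) * of_nat b * yfrac (x_exp n i))
      = of_nat b * yfrac (x_exp n k)"
    using k by (simp add: sum.delta)
  have sB: "(\<Sum>j<n. \<Sum>i<j. ?h i j)
      = of_nat c * ((\<Sum>j\<in>{k<..<n}. yfrac (ratio_exp k j)) - (\<Sum>i<k. yfrac (ratio_exp i k)))"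
  proof -
    have "?h i j = (if k = i then of_nat c * yfrac (ratio_exp i j) else 0)
        - (if k = j then of_nat c * yfrac (ratio_exp i j) else 0)" if "i < j" for i j
      using that by (simp add: x_degree_ratio_exp)
    then have "(\<Sum>j<n. \<Sum>i<j. ?h i j) = (\<Sum>j<n. \<Sum>i<j. (if k = i then of_nat c * yfrac (ratio_exp i j) else 0)
        - (if k = j then of_nat c * yfrac (ratio_exp i j) else 0))"
      by (intro sum.cong refl) simp
    then show ?thesis
      by (simp add: sum_triangle_delta[OF k] sum_distrib_left right_diff_distrib)
  qed
  show ?thesis
    unfolding integrand_def euler_op_mult[OF x_degree_add] dA dB sA sB by (simp add: algebra_simps)
qed

text \<open>Both branches expand \<open>x\<^sub>k / (x\<^sub>j - x\<^sub>k)\<close> in the region \<open>|x\<^sub>0| < \<cdots> < |x\<^sub>n\<^sub>-\<^sub>1|\<close>: as \<open>(x\<^sub>k/x\<^sub>j) / (1 - x\<^sub>k/x\<^sub>j)\<close>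
  if \<open>k < j\<close> and as \<open>-1/(1 - x\<^sub>j/x\<^sub>k)\<close> if \<open>j < k\<close>. Hence \<open>w k j + w j k = -1\<close> and
  \<open>y\<^sub>j w k j + y\<^sub>k w j k = y\<^sub>j y\<^sub>k\<close>, the hypotheses of the symmetric-function identity.\<close>

definition wfrac :: "nat \<Rightarrow> nat \<Rightarrow> tseries" where
  "wfrac k j = (if k < j then yfrac (ratio_exp k j) else - (1 + yfrac (ratio_exp j k)))"

lemma wfrac_antisym: "j \<noteq> k \<Longrightarrow> wfrac k j + wfrac j k = -1"
  unfolding wfrac_def by (cases "k < j") auto

lemma yfrac_ratio_identity:
  assumes kj: "k < j" and jn: "j < n"
  shows "yfrac (x_exp n j) * yfrac (ratio_exp k j) - yfrac (x_exp n k) * (1 + yfrac (ratio_exp k j))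
       = yfrac (x_exp n j) * yfrac (x_exp n k)"
proof -
  have kn: "k < n" using kj jn by simp
  let ?X = "\<lambda>u. subst_monom fps_X u :: tseries" and ?G = "\<lambda>u. subst_monom geom_fps u :: tseries"
  let ?a = "?X (x_exp n j)" and ?ia = "?G (x_exp n j)" and ?q = "?X (ratio_exp k j)"
    and ?iq = "?G (ratio_exp k j)" and ?ik = "?G (x_exp n k)"
  have ha: "(1 - ?a) * ?ia = 1" by (rule subst_monom_geom_inverse[OF fin_supp_x_exp x_exp_neq_0[OF jn]])
  have hq: "(1 - ?q) * ?iq = 1" by (rule subst_monom_geom_inverse[OF fin_supp_ratio_exp ratio_exp_neq_0[OF kj]])
  have xk: "?X (x_exp n k) = ?q * ?a"
    using x_exp_split[OF kj jn]
      subst_monom_X_add[OF fin_supp_ratio_exp ratio_exp_neq_0[OF kj] fin_supp_x_exp x_exp_neq_0[OF jn]]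
    by simp
  have hk: "(1 - ?q * ?a) * ?ik = 1"
    using subst_monom_geom_inverse[OF fin_supp_x_exp x_exp_neq_0[OF kn]] xk by simp
  have yj: "yfrac (x_exp n j) = ?a * ?ia" by (rule yfrac_eq[OF fin_supp_x_exp x_exp_neq_0[OF jn]])
  have yq: "yfrac (ratio_exp k j) = ?q * ?iq" by (rule yfrac_eq[OF fin_supp_ratio_exp ratio_exp_neq_0[OF kj]])
  have yk: "yfrac (x_exp n k) = ?q * ?a * ?ik"
    using yfrac_eq[OF fin_supp_x_exp x_exp_neq_0[OF kn]] xk by simp
  have h1: "1 + ?q * ?iq = ?iq" using hq by (simp add: algebra_simps)
  have h2: "?ia - ?ik = ?ia * ?ik * ?a * (1 - ?q)"
  proof -
    have "?ia * ?ik * ?a * (1 - ?q) = ?ia * ((1 - ?q * ?a) * ?ik) - ((1 - ?a) * ?ia) * ?ik"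
      by (simp add: algebra_simps)
    also have "\<dots> = ?ia - ?ik" using hk ha by simp
    finally show ?thesis ..
  qed
  have "yfrac (x_exp n j) * yfrac (ratio_exp k j) - yfrac (x_exp n k) * (1 + yfrac (ratio_exp k j))
      = ?a * ?q * ?iq * (?ia - ?ik)"
    unfolding yj yq yk h1 by (simp add: algebra_simps)
  also have "\<dots> = ?a * ?q * ?a * ?ia * ?ik * ((1 - ?q) * ?iq)"
    unfolding h2 by (simp add: algebra_simps)
  also have "\<dots> = yfrac (x_exp n j) * yfrac (x_exp n k)"
    unfolding hq yj yk by (simp add: algebra_simps)
  finally show ?thesis .
qed

lemma wfrac_weighted:
  assumes "j \<noteq> k" "j < n" "k < n"
  shows "yfrac (x_exp n j) * wfrac k j + yfrac (x_exp n k) * wfrac j k = yfrac (x_exp n j) * yfrac (x_exp n k)"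
proof (cases "k < j")
  case True
  then show ?thesis
    using yfrac_ratio_identity[OF True assms(2)] unfolding wfrac_def by (simp add: algebra_simps)
next
  case False
  then have "j < k" using assms by simp
  then show ?thesis
    using yfrac_ratio_identity[OF \<open>j < k\<close> assms(3)] unfolding wfrac_def by (simp add: algebra_simps)
qed

lemma sum_wfrac:
  assumes k: "k < n"
  shows "(\<Sum>j\<in>{..<n} - {k}. wfrac k j)
       = (\<Sum>j\<in>{k<..<n}. yfrac (ratio_exp k j)) - (\<Sum>i<k. yfrac (ratio_exp i k)) - of_nat k"
proof -
  have "(\<Sum>j\<in>{..<n} - {k}. wfrac k j) = (\<Sum>j\<in>{k<..<n} \<union> {..<k}. wfrac k j)"
    using k by (intro sum.cong) auto
  also have "\<dots> = (\<Sum>j\<in>{k<..<n}. wfrac k j) + (\<Sum>j<k. wfrac k j)"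
    by (rule sum.union_disjoint) auto
  also have "\<dots> = (\<Sum>j\<in>{k<..<n}. yfrac (ratio_exp k j)) + (\<Sum>j<k. - (1 + yfrac (ratio_exp j k)))"
    by (intro arg_cong2[where f = "(+)"] sum.cong refl) (auto simp: wfrac_def)
  finally show ?thesis by (simp add: sum_subtractf)
qed

lemma euler_op_yfrac_prod:
  assumes "k < n" "R \<subseteq> {..<n}" "k \<notin> R"
  shows "euler_op (x_degree k) (\<Prod>i\<in>R. yfrac (x_exp n i)) = 0"
proof -
  have "euler_op (x_degree k) (yfrac (x_exp n i)) = yfrac (x_exp n i) * 0" if "i \<in> R" for i
  proof -
    have "i < n" "x_degree k (x_exp n i) = 0"
      using that assms by (auto simp: x_degree_x_exp)
    then show ?thesis
      by (simp add: yfrac_def euler_op_subst_monom[OF x_degree_add fin_supp_x_exp x_exp_neq_0])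
  qed
  then have "euler_op (x_degree k) (\<Prod>i\<in>R. yfrac (x_exp n i)) = (\<Prod>i\<in>R. yfrac (x_exp n i)) * (\<Sum>i\<in>R. 0)"
    using assms(2) by (intro euler_op_prod[OF x_degree_add]) (auto intro: finite_subset)
  then show ?thesis by simp
qed

section \<open>The recurrence\<close>

definition psi_ct :: "nat \<Rightarrow> nat \<Rightarrow> nat \<Rightarrow> nat \<Rightarrow> nat \<Rightarrow> real" where
  "psi_ct n a b c r = mcoeff (integrand n b c * esym {..<n} r (\<lambda>i. yfrac (x_exp n i))) (ct_exp n a c)"

text \<open>The constant term of an Euler derivative \<open>x\<^sub>k \<partial>/\<partial>x\<^sub>k\<close> vanishes; after the shift by
  \<open>x\<^sub>k\<^bsup>-(a - 1 + c k)\<^esup>\<close> this becomes the following relation.\<close>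

lemma ct_integrand_step:
  assumes k: "k < n" and R: "R \<subseteq> {..<n}" "k \<notin> R"
  shows "mcoeff (integrand n b c * (\<Prod>i\<in>R. yfrac (x_exp n i))
           * (of_nat b * yfrac (x_exp n k) + of_nat c * (\<Sum>j\<in>{..<n} - {k}. wfrac k j))) (ct_exp n a c)
       = real (a - 1) * mcoeff (integrand n b c * (\<Prod>i\<in>R. yfrac (x_exp n i))) (ct_exp n a c)"
proof -
  let ?f = "integrand n b c * (\<Prod>i\<in>R. yfrac (x_exp n i))"
  let ?L = "of_nat b * yfrac (x_exp n k) + of_nat c * (\<Sum>j\<in>{..<n} - {k}. wfrac k j)"
  have euler: "euler_op (x_degree k) ?f = ?f * ?L + of_nat (c * k) * ?f"
    by (simp add: euler_op_mult[OF x_degree_add] euler_op_integrand[OF k]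
        euler_op_yfrac_prod[OF k R] sum_wfrac[OF k] algebra_simps)
  have "real (a - 1 + c * k) * mcoeff ?f (ct_exp n a c) = mcoeff (euler_op (x_degree k) ?f) (ct_exp n a c)"
    using x_degree_ct_exp[OF k, of a c] by simp
  also have "\<dots> = mcoeff (?f * ?L) (ct_exp n a c) + real (c * k) * mcoeff ?f (ct_exp n a c)"
    unfolding euler by (simp only: mcoeff_add mcoeff_of_nat_mult)
  finally show ?thesis by (simp add: algebra_simps)
qed

lemma psi_ct_recurrence:
  assumes r: "r < n"
  shows "real (b * Suc r + c * (Suc r choose 2)) * psi_ct n a b c (Suc r)
         - real (c * (n - r choose 2)) * psi_ct n a b c r
       = real (a - 1) * real (n - r) * psi_ct n a b c r"
proof -
  let ?y = "\<lambda>i. yfrac (x_exp n i)" and ?ct = "\<lambda>h. mcoeff h (ct_exp n a c)"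
  let ?E = "\<lambda>R. \<Prod>i\<in>R. ?y i"
  let ?L = "\<lambda>k. of_nat b * ?y k + of_nat c * (\<Sum>j\<in>{..<n} - {k}. wfrac k j)"
  have identity: "(\<Sum>R\<in>card_subsets {..<n} r. \<Sum>k\<in>{..<n} - R. ?E R * ?L k)
      = of_nat (b * Suc r + c * (Suc r choose 2)) * esym {..<n} (Suc r) ?y
        - of_nat (c * (n - r choose 2)) * esym {..<n} r ?y"
  proof -
    have "(\<Sum>R\<in>card_subsets {..<n} r. \<Sum>k\<in>{..<n} - R. ?E R * ?L k)
        = (of_nat b * of_nat (Suc r) + of_nat c * of_nat (Suc r choose 2)) * esym {..<n} (Suc r) ?y
          - of_nat c * of_nat (card {..<n} - r choose 2) * esym {..<n} r ?y"
      by (rule esym_recurrence_identity) (auto simp: wfrac_antisym wfrac_weighted)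
    then show ?thesis by (simp only: of_nat_add of_nat_mult card_lessThan)
  qed
  have "?ct (integrand n b c * (\<Sum>R\<in>card_subsets {..<n} r. \<Sum>k\<in>{..<n} - R. ?E R * ?L k))
      = (\<Sum>R\<in>card_subsets {..<n} r. \<Sum>k\<in>{..<n} - R. ?ct (integrand n b c * ?E R * ?L k))"
    by (simp only: sum_distrib_left mcoeff_sum mult.assoc)
  also have "\<dots> = (\<Sum>R\<in>card_subsets {..<n} r. \<Sum>k\<in>{..<n} - R. real (a - 1) * ?ct (integrand n b c * ?E R))"
    by (intro sum.cong refl ct_integrand_step) (auto simp: card_subsets_def)
  also have "\<dots> = real (a - 1) * real (n - r) * psi_ct n a b c r"
  proof -
    have "card ({..<n} - R) = n - r" if "R \<in> card_subsets {..<n} r" for R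
      using that by (auto simp: card_subsets_def card_Diff_subset finite_subset)
    then show ?thesis
      by (simp add: psi_ct_def esym_def sum_distrib_left mcoeff_sum mult_ac)
  qed
  moreover have "?ct (integrand n b c * (of_nat (b * Suc r + c * (Suc r choose 2)) * esym {..<n} (Suc r) ?y
        - of_nat (c * (n - r choose 2)) * esym {..<n} r ?y))
      = real (b * Suc r + c * (Suc r choose 2)) * psi_ct n a b c (Suc r)
        - real (c * (n - r choose 2)) * psi_ct n a b c r"
    by (simp only: right_diff_distrib mult.left_commute[of "integrand n b c"] mcoeff_diff
        mcoeff_of_nat_mult psi_ct_def)
  ultimately show ?thesis unfolding identity by simp
qed

lemma real_choose_two: "real (m choose 2) = real m * (real m - 1) / 2"
  by (induction m) (simp_all add: numeral_2_eq_2 field_simps)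

lemma recurrence_step:
  fixes P :: "nat \<Rightarrow> real"
  assumes a: "0 < a" and b: "0 < b" and r: "r < n"
    and rec: "real (b * Suc r + c * (Suc r choose 2)) * P (Suc r) - real (c * (n - r choose 2)) * P r
              = real (a - 1) * real (n - r) * P r"
  shows "P (Suc r) = real (n - r) / real (Suc r)
           * ((real a - 1 + (real n - real (Suc r)) * real c / 2) / (real b + real r * real c / 2)) * P r"
proof -
  define D where "D = real b + real r * real c / 2"
  define N where "N = real a - 1 + (real n - real (Suc r)) * real c / 2"
  have D: "D > 0" using b by (simp add: D_def add_pos_nonneg)
  have "real (Suc r) * D = real (b * Suc r + c * (Suc r choose 2))"
    unfolding D_def by (simp add: real_choose_two field_simps)
  then have "real (Suc r) * D * P (Suc r) = real (b * Suc r + c * (Suc r choose 2)) * P (Suc r)"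
    by simp
  also have "\<dots> = (real (c * (n - r choose 2)) + real (a - 1) * real (n - r)) * P r"
    using rec by (simp add: algebra_simps)
  also have "real (c * (n - r choose 2)) + real (a - 1) * real (n - r) = real (n - r) * N"
    unfolding N_def using r a by (simp add: real_choose_two of_nat_diff field_simps)
  finally have "real (Suc r) * D * P (Suc r) = real (n - r) * N * P r" .
  then have "P (Suc r) = real (n - r) / real (Suc r) * (N / D) * P r"
    using D by (simp add: field_simps del: of_nat_Suc)
  then show ?thesis by (simp add: N_def D_def)
qed

lemma recurrence_closed_form:
  fixes P :: "nat \<Rightarrow> real"
  assumes a: "0 < a" and b: "0 < b" and k: "k \<le> n"
    and rec: "\<And>r. r < n \<Longrightarrow> real (b * Suc r + c * (Suc r choose 2)) * P (Suc r)
              - real (c * (n - r choose 2)) * P r = real (a - 1) * real (n - r) * P r"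
  shows "P k = real (n choose k) * P 0 *
    (\<Prod>j=1..k. (real a - 1 + (real n - real j) * real c / 2) / (real b + (real j - 1) * real c / 2))"
  using k
proof (induction k)
  case (Suc r)
  then have r: "r < n" by simp
  have "real (n choose Suc r) * real (Suc r) = real (n choose r) * real (n - r)"
    using binomial_absorb_comp[of n r] binomial_absorption[of r n] by (metis of_nat_mult mult.commute)
  then have "real (n choose Suc r) = real (n choose r) * (real (n - r) / real (Suc r))"
    by (simp add: field_simps del: of_nat_Suc)
  then show ?case
    using Suc.IH r recurrence_step[OF a b r rec[OF r]]
    by (simp add: prod.nat_ivl_Suc' mult_ac)
qed simp

section \<open>Identification with the definitions\<close>

text \<open>Labels for the factors \<open>(1 - x\<^sub>i)\<^bsup>-b\<^esup>\<close>, \<open>(1 - x\<^sub>i/x\<^sub>j)\<^bsup>-c\<^esup>\<close> and \<open>x\<^sub>i/(1 - x\<^sub>i)\<close> of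
  \<^term>\<open>integrand n b c * (\<Prod>i\<in>S. yfrac (x_exp n i))\<close>; the powers a monomial takes from them
  are the indices \<open>m\<close>, \<open>p\<close> and \<open>r\<close> of \<^const>\<open>Psi_index\<close>.\<close>

datatype factor = Fx nat | Fq nat nat | Fy nat

definition factors :: "nat \<Rightarrow> nat set \<Rightarrow> factor set" where
  "factors n S = Fx ` {..<n} \<union> (\<lambda>(j, i). Fq i j) ` (SIGMA j:{..<n}. {..<j}) \<union> Fy ` S"

definition factor_series :: "nat \<Rightarrow> nat \<Rightarrow> factor \<Rightarrow> real fps" where
  "factor_series b c x = (case x of Fx i \<Rightarrow> negbin_fps b | Fq i j \<Rightarrow> negbin_fps c | Fy i \<Rightarrow> geom_tail_fps)"

definition factor_exp :: "nat \<Rightarrow> factor \<Rightarrow> nat \<Rightarrow> nat" where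
  "factor_exp n x = (case x of Fx i \<Rightarrow> x_exp n i | Fq i j \<Rightarrow> ratio_exp i j | Fy i \<Rightarrow> x_exp n i)"

lemma mem_factors:
  "x \<in> factors n S \<longleftrightarrow> (case x of Fx i \<Rightarrow> i < n | Fq i j \<Rightarrow> i < j \<and> j < n | Fy i \<Rightarrow> i \<in> S)"
  unfolding factors_def by (cases x) auto

lemma (in comm_monoid_set) factors_split:
  assumes "finite S"
  shows "F g (factors n S) = (F (\<lambda>i. g (Fx i)) {..<n} \<^bold>* F (\<lambda>j. F (\<lambda>i. g (Fq i j)) {..<j}) {..<n})
    \<^bold>* F (\<lambda>i. g (Fy i)) S"
proof -
  let ?A = "Fx ` {..<n}" and ?B = "(\<lambda>(j, i). Fq i j) ` (SIGMA j:{..<n}. {..<j})" and ?C = "Fy ` S"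
  have "F g (factors n S) = F g (?A \<union> ?B) \<^bold>* F g ?C"
    unfolding factors_def using assms by (intro union_disjoint) auto
  also have "F g (?A \<union> ?B) = F g ?A \<^bold>* F g ?B"
    by (intro union_disjoint) auto
  also have "F g ?A = F (\<lambda>i. g (Fx i)) {..<n}"
    by (subst reindex) (auto simp: inj_on_def)
  also have "F g ?B = F (\<lambda>(j, i). g (Fq i j)) (SIGMA j:{..<n}. {..<j})"
    by (subst reindex) (auto simp: inj_on_def case_prod_beta)
  also have "\<dots> = F (\<lambda>j. F (\<lambda>i. g (Fq i j)) {..<j}) {..<n}"
    by (rule Sigma[symmetric]) auto
  also have "F g ?C = F (\<lambda>i. g (Fy i)) S"
    by (subst reindex) (auto simp: inj_on_def)
  finally show ?thesis .
qed

lemma factor_exp_ok: "S \<subseteq> {..<n} \<Longrightarrow> x \<in> factors n S \<Longrightarrow> fin_supp (factor_exp n x) \<and> factor_exp n x \<noteq> 0"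
  by (cases x) (auto simp: mem_factors factor_exp_def fin_supp_x_exp fin_supp_ratio_exp
      x_exp_neq_0 ratio_exp_neq_0)

lemma ct_integrand_yfrac_prod:
  assumes S: "S \<subseteq> {..<n}"
  shows "mcoeff (integrand n b c * (\<Prod>i\<in>S. yfrac (x_exp n i))) (ct_exp n a c)
       = (\<Sum>e\<in>decompositions (factors n S) (factor_exp n) (ct_exp n a c).
            \<Prod>x\<in>factors n S. factor_series b c x $ e x)"
proof -
  have fS: "finite S" using S finite_subset by blast
  have fin: "fin_supp (ct_exp n a c)"
    unfolding fin_supp_def ct_exp_def by (rule finite_subset[of _ "{..<n}"]) auto
  have "integrand n b c * (\<Prod>i\<in>S. yfrac (x_exp n i))
      = (\<Prod>x\<in>factors n S. subst_monom (factor_series b c x) (factor_exp n x))"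
    unfolding prod.factors_split[OF fS] integrand_def
    by (simp add: factor_series_def factor_exp_def yfrac_def)
  then show ?thesis
    using factor_exp_ok[OF S] fS
    by (simp add: mcoeff_prod_subst_monom fin finite_subset[of _ "factors n S"] factors_def)
qed

lemma eq_iff_x_degree_eq:
  assumes "\<forall>l\<ge>n. f l = 0" and "\<forall>l\<ge>n. h l = 0"
  shows "f = h \<longleftrightarrow> (\<forall>k<n. x_degree k f = x_degree k h)"
proof
  assume "\<forall>k<n. x_degree k f = x_degree k h"
  then have "f l = h l" if "l < n" for l
    using that by (induction l) (auto simp: x_degree_def)
  then show "f = h" using assms by (metis ext not_le)
qed simp

definition triple_of :: "(factor \<Rightarrow> nat) \<Rightarrow> (nat \<Rightarrow> nat) \<times> (nat \<Rightarrow> nat) \<times> (nat \<Rightarrow> nat \<Rightarrow> nat)" where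
  "triple_of e = (\<lambda>i. e (Fx i), \<lambda>i. e (Fy i), \<lambda>i j. e (Fq i j))"

definition labels_of :: "(nat \<Rightarrow> nat) \<times> (nat \<Rightarrow> nat) \<times> (nat \<Rightarrow> nat \<Rightarrow> nat) \<Rightarrow> factor \<Rightarrow> nat" where
  "labels_of = (\<lambda>(m, r, p) x. case x of Fx i \<Rightarrow> m i | Fq i j \<Rightarrow> p i j | Fy i \<Rightarrow> r i)"

lemma triple_of_labels_of [simp]: "triple_of (labels_of t) = t"
  by (cases t) (simp add: triple_of_def labels_of_def)

lemma labels_of_triple_of [simp]: "labels_of (triple_of e) = e"
  by (rule ext) (simp add: triple_of_def labels_of_def split: factor.split)

lemma xexp_triple_of:
  assumes S: "S \<subseteq> {..<n}" and a: "0 < a" and k: "k < n"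
    and e: "\<forall>x. x \<notin> factors n S \<longrightarrow> e x = 0"
  shows "xexp n a c (\<lambda>i. e (Fx i)) (\<lambda>i. e (Fy i)) (\<lambda>i j. e (Fq i j)) k
       = x_degree k (\<lambda>l. \<Sum>x\<in>factors n S. e x * factor_exp n x l) - x_degree k (ct_exp n a c)"
proof -
  have fS: "finite S" using S finite_subset by blast
  have x_degree_sum: "x_degree k (\<lambda>l. \<Sum>x\<in>A. e x * U x l) = (\<Sum>x\<in>A. int (e x) * x_degree k (U x))"
    for A :: "factor set" and U
    unfolding x_degree_def by (simp add: sum_subtractf algebra_simps sum_distrib_left)
  have sx: "(\<Sum>i<n. int (e (Fx i)) * x_degree k (x_exp n i)) = int (e (Fx k))"
    using k by (simp add: x_degree_x_exp if_distrib[of "\<lambda>z. _ * z"] sum.delta cong: if_cong)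
  have sy: "(\<Sum>i\<in>S. int (e (Fy i)) * x_degree k (x_exp n i)) = int (e (Fy k))"
    using k e fS by (simp add: x_degree_x_exp if_distrib[of "\<lambda>z. _ * z"] sum.delta mem_factors
        cong: if_cong)
  have sq: "(\<Sum>j<n. \<Sum>i<j. int (e (Fq i j)) * x_degree k (ratio_exp i j))
      = (\<Sum>j\<in>{k<..<n}. int (e (Fq k j))) - (\<Sum>i<k. int (e (Fq i k)))"
  proof -
    have "(\<Sum>j<n. \<Sum>i<j. int (e (Fq i j)) * x_degree k (ratio_exp i j))
        = (\<Sum>j<n. \<Sum>i<j. (if k = i then int (e (Fq i j)) else 0) - (if k = j then int (e (Fq i j)) else 0))"
      by (intro sum.cong refl) (auto simp: x_degree_ratio_exp)
    then show ?thesis by (simp add: sum_triangle_delta[OF k])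
  qed
  have "x_degree k (\<lambda>l. \<Sum>x\<in>factors n S. e x * factor_exp n x l)
      = (\<Sum>x\<in>factors n S. int (e x) * x_degree k (factor_exp n x))"
    by (rule x_degree_sum)
  also have "\<dots> = int (e (Fx k)) + ((\<Sum>j\<in>{k<..<n}. int (e (Fq k j))) - (\<Sum>i<k. int (e (Fq i k))))
      + int (e (Fy k))"
    unfolding sum.factors_split[OF fS] factor_exp_def factor.case sx sy sq ..
  finally show ?thesis
    using a by (simp add: xexp_def x_degree_ct_exp[OF k] sum.distrib of_nat_diff)
qed

lemma decompositions_iff_xexp:
  assumes S: "S \<subseteq> {..<n}" and a: "0 < a" and e: "\<forall>x. x \<notin> factors n S \<longrightarrow> e x = 0"
  shows "e \<in> decompositions (factors n S) (factor_exp n) (ct_exp n a c)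
     \<longleftrightarrow> (\<forall>k<n. xexp n a c (\<lambda>i. e (Fx i)) (\<lambda>i. e (Fy i)) (\<lambda>i j. e (Fq i j)) k = 0)"
proof -
  let ?V = "\<lambda>l. \<Sum>x\<in>factors n S. e x * factor_exp n x l"
  have "factor_exp n x l = 0" if "x \<in> factors n S" "n \<le> l" for x l
    using that by (cases x) (auto simp: mem_factors factor_exp_def x_exp_def ratio_exp_def)
  then have "\<forall>l\<ge>n. ?V l = 0" by simp
  moreover have "\<forall>l\<ge>n. ct_exp n a c l = 0" by (simp add: ct_exp_def)
  ultimately have "ct_exp n a c = ?V \<longleftrightarrow> (\<forall>k<n. x_degree k (ct_exp n a c) = x_degree k ?V)"
    by (intro eq_iff_x_degree_eq)
  also have "\<dots> \<longleftrightarrow> (\<forall>k<n. xexp n a c (\<lambda>i. e (Fx i)) (\<lambda>i. e (Fy i)) (\<lambda>i j. e (Fq i j)) k = 0)"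
    using xexp_triple_of[OF S a _ e] by auto
  finally show ?thesis
    using e by (simp add: decompositions_def fun_eq_iff)
qed

definition Psi_index_on :: "nat \<Rightarrow> nat \<Rightarrow> nat \<Rightarrow> nat \<Rightarrow> nat set
    \<Rightarrow> ((nat \<Rightarrow> nat) \<times> (nat \<Rightarrow> nat) \<times> (nat \<Rightarrow> nat \<Rightarrow> nat)) set" where
  "Psi_index_on n k a c S = {t \<in> Psi_index n k a c. {i. i < n \<and> 0 < fst (snd t) i} = S}"

definition nonzero_decompositions :: "nat \<Rightarrow> nat \<Rightarrow> nat \<Rightarrow> nat set \<Rightarrow> (factor \<Rightarrow> nat) set" where
  "nonzero_decompositions n a c S =
     {e \<in> decompositions (factors n S) (factor_exp n) (ct_exp n a c). \<forall>i\<in>S. e (Fy i) \<noteq> 0}"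

lemma triple_of_mem_Psi_index_on_iff:
  assumes S: "S \<in> card_subsets {..<n} k" and a: "0 < a"
  shows "triple_of e \<in> Psi_index_on n k a c S \<longleftrightarrow> e \<in> nonzero_decompositions n a c S"
proof -
  have Sn: "S \<subseteq> {..<n}" "card S = k" using S by (auto simp: card_subsets_def)
  have supp_iff: "(\<forall>x. x \<notin> factors n S \<longrightarrow> e x = 0)
      \<longleftrightarrow> (\<forall>i. n \<le> i \<longrightarrow> e (Fx i) = 0) \<and> (\<forall>i j. \<not> (i < j \<and> j < n) \<longrightarrow> e (Fq i j) = 0)
          \<and> (\<forall>i. i \<notin> S \<longrightarrow> e (Fy i) = 0)"
    by (auto simp: mem_factors not_less split: factor.splits)
  have supp_S: "{i. i < n \<and> 0 < e (Fy i)} = S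
      \<longleftrightarrow> (\<forall>i. i < n \<longrightarrow> i \<notin> S \<longrightarrow> e (Fy i) = 0) \<and> (\<forall>i\<in>S. e (Fy i) \<noteq> 0)"
    using Sn(1) by auto
  have "triple_of e \<in> Psi_index_on n k a c S
      \<longleftrightarrow> (\<forall>i. n \<le> i \<longrightarrow> e (Fx i) = 0 \<and> e (Fy i) = 0) \<and> (\<forall>i j. \<not> (i < j \<and> j < n) \<longrightarrow> e (Fq i j) = 0)
          \<and> (\<forall>k<n. xexp n a c (\<lambda>i. e (Fx i)) (\<lambda>i. e (Fy i)) (\<lambda>i j. e (Fq i j)) k = 0)
          \<and> {i. i < n \<and> 0 < e (Fy i)} = S"
    using Sn(2) by (auto simp: Psi_index_on_def Psi_index_def triple_of_def)
  also have "\<dots> \<longleftrightarrow> (\<forall>i. n \<le> i \<longrightarrow> e (Fx i) = 0) \<and> (\<forall>i j. \<not> (i < j \<and> j < n) \<longrightarrow> e (Fq i j) = 0)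
          \<and> (\<forall>i. i \<notin> S \<longrightarrow> e (Fy i) = 0) \<and> (\<forall>i\<in>S. e (Fy i) \<noteq> 0)
          \<and> (\<forall>k<n. xexp n a c (\<lambda>i. e (Fx i)) (\<lambda>i. e (Fy i)) (\<lambda>i j. e (Fq i j)) k = 0)"
    unfolding supp_S using Sn(1) by (auto simp: not_less) (meson not_less)
  also have "\<dots> \<longleftrightarrow> e \<in> nonzero_decompositions n a c S"
    using decompositions_iff_xexp[OF Sn(1) a] supp_iff
    by (auto simp: nonzero_decompositions_def decompositions_def)
  finally show ?thesis .
qed

definition psi_weight :: "nat \<Rightarrow> nat \<Rightarrow> nat \<Rightarrow> (nat \<Rightarrow> nat) \<times> (nat \<Rightarrow> nat) \<times> (nat \<Rightarrow> nat \<Rightarrow> nat) \<Rightarrow> real" where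
  "psi_weight n b c = (\<lambda>(m, r, p). (\<Prod>i<n. nb b (m i)) * (\<Prod>j<n. \<Prod>i<j. nb c (p i j)))"

lemma bij_betw_triple_of:
  assumes "S \<in> card_subsets {..<n} k" and "0 < a"
  shows "bij_betw triple_of (nonzero_decompositions n a c S) (Psi_index_on n k a c S)"
  using triple_of_mem_Psi_index_on_iff[OF assms]
  by (intro bij_betw_byWitness[where f' = labels_of]) (auto, metis triple_of_labels_of)

lemma finite_nonzero_decompositions:
  assumes "S \<subseteq> {..<n}"
  shows "finite (nonzero_decompositions n a c S)"
proof -
  have "finite (decompositions (factors n S) (factor_exp n) (ct_exp n a c))"
    using factor_exp_ok[OF assms] finite_subset[OF assms]
    by (intro finite_decompositions) (auto simp: factors_def)
  then show ?thesis
    unfolding nonzero_decompositions_def by (rule finite_subset[rotated]) auto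
qed

lemma ct_integrand_yfrac_prod_eq_sum:
  assumes S: "S \<in> card_subsets {..<n} k" and a: "0 < a"
  shows "mcoeff (integrand n b c * (\<Prod>i\<in>S. yfrac (x_exp n i))) (ct_exp n a c)
       = sum (psi_weight n b c) (Psi_index_on n k a c S)"
proof -
  have Sn: "S \<subseteq> {..<n}" using S by (simp add: card_subsets_def)
  have fS: "finite S" using Sn finite_subset by blast
  let ?D = "decompositions (factors n S) (factor_exp n) (ct_exp n a c)"
  have prod: "(\<Prod>x\<in>factors n S. factor_series b c x $ e x)
      = psi_weight n b c (triple_of e) * (\<Prod>i\<in>S. if e (Fy i) = 0 then 0 else 1)" for e
    unfolding prod.factors_split[OF fS]
    by (simp add: factor_series_def negbin_fps_def geom_tail_fps_def psi_weight_def triple_of_def)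
  have "mcoeff (integrand n b c * (\<Prod>i\<in>S. yfrac (x_exp n i))) (ct_exp n a c)
      = (\<Sum>e\<in>?D. psi_weight n b c (triple_of e) * (\<Prod>i\<in>S. if e (Fy i) = 0 then 0 else 1))"
    unfolding ct_integrand_yfrac_prod[OF Sn] prod ..
  also have "\<dots> = (\<Sum>e\<in>nonzero_decompositions n a c S. psi_weight n b c (triple_of e))"
  proof (rule sum.mono_neutral_cong_right)
    show "finite ?D"
      using factor_exp_ok[OF Sn] fS by (intro finite_decompositions) (auto simp: factors_def)
    show "nonzero_decompositions n a c S \<subseteq> ?D"
      by (auto simp: nonzero_decompositions_def)
    show "\<forall>e\<in>?D - nonzero_decompositions n a c S.
        psi_weight n b c (triple_of e) * (\<Prod>i\<in>S. if e (Fy i) = 0 then 0 else 1) = 0"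
      using fS by (auto simp: nonzero_decompositions_def)
    fix e assume "e \<in> nonzero_decompositions n a c S"
    then have "(\<Prod>i\<in>S. if e (Fy i) = 0 then 0 else 1) = (1::real)"
      by (intro prod.neutral) (auto simp: nonzero_decompositions_def)
    then show "psi_weight n b c (triple_of e) * (\<Prod>i\<in>S. if e (Fy i) = 0 then 0 else 1)
        = psi_weight n b c (triple_of e)" by simp
  qed
  also have "\<dots> = sum (psi_weight n b c) (Psi_index_on n k a c S)"
    by (rule sum.reindex_bij_betw[OF bij_betw_triple_of[OF S a]])
  finally show ?thesis .
qed

lemma Psi_eq_psi_ct:
  assumes a: "0 < a"
  shows "Psi n k a b c = psi_ct n a b c k"
proof -
  have Psi_index: "Psi_index n k a c = (\<Union>S\<in>card_subsets {..<n} k. Psi_index_on n k a c S)"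
    by (auto simp: Psi_index_on_def Psi_index_def card_subsets_def)
  have finite_on: "finite (Psi_index_on n k a c S)" if "S \<in> card_subsets {..<n} k" for S
    using bij_betw_finite[OF bij_betw_triple_of[OF that a]] finite_nonzero_decompositions that
    by (auto simp: card_subsets_def)
  have "Psi n k a b c = sum (psi_weight n b c) (Psi_index n k a c)"
    by (simp add: Psi_def psi_weight_def)
  also have "\<dots> = (\<Sum>S\<in>card_subsets {..<n} k. sum (psi_weight n b c) (Psi_index_on n k a c S))"
    unfolding Psi_index
  proof (rule sum.UNION_disjoint)
    show "finite (card_subsets {..<n} k)" by (simp add: finite_card_subsets)
    show "\<forall>S\<in>card_subsets {..<n} k. finite (Psi_index_on n k a c S)" using finite_on by blast
  qed (auto simp: Psi_index_on_def)
  also have "\<dots> = psi_ct n a b c k"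
    by (simp add: psi_ct_def esym_def sum_distrib_left mcoeff_sum ct_integrand_yfrac_prod_eq_sum[OF _ a])
  finally show ?thesis .
qed

lemma Mn_eq_Psi_0: "Mn n a b c = Psi n 0 a b c"
proof -
  let ?f = "\<lambda>(m, p). (m, (\<lambda>_. 0::nat), p)"
  have image: "?f ` M_index n a c = Psi_index n 0 a c"
  proof
    show "?f ` M_index n a c \<subseteq> Psi_index n 0 a c"
      by (auto simp: M_index_def Psi_index_def)
    show "Psi_index n 0 a c \<subseteq> ?f ` M_index n a c"
    proof
      fix t assume t: "t \<in> Psi_index n 0 a c"
      obtain m r p where t_eq: "t = (m, r, p)" by (cases t)
      have "{i. i < n \<and> 0 < r i} = {}" "\<forall>i. n \<le> i \<longrightarrow> r i = 0"
        using t by (auto simp: t_eq Psi_index_def)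
      then have r: "r = (\<lambda>_. 0)" by (auto simp: fun_eq_iff) (metis not_le neq0_conv)
      have "(m, p) \<in> M_index n a c" using t by (auto simp: t_eq r Psi_index_def M_index_def)
      then show "t \<in> ?f ` M_index n a c" using t_eq r by force
    qed
  qed
  have inj: "inj_on ?f (M_index n a c)" by (auto simp: inj_on_def)
  show ?thesis
    unfolding Mn_def Psi_def image[symmetric] sum.reindex[OF inj] by (simp add: case_prod_beta)
qed

theorem theorem1p8:
  fixes n a b c k :: nat
  assumes "0 < n" and "0 < a" and "0 < b" and "k \<le> n"
  shows "Psi n k a b c =
    real (n choose k) * Mn n a b c *
      (\<Prod>j=1..k. (real a - 1 + (real n - real j) * real c / 2) /
                  (real b + (real j - 1) * real c / 2))"
  using recurrence_closed_form[OF assms(2,3,4) psi_ct_recurrence]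
  by (simp add: Psi_eq_psi_ct[OF assms(2)] Mn_eq_Psi_0)

end
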